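(* Let $A\in\mathbb{R}^{d\times d}$, $B\in\mathbb{R}^{d\times p}$, and $Q,R$ symmetric positive definite of sizes $d\times d$, $p\times p$. For $U\in\mathbb{R}^{p\times d}$ with $\alpha(A+BU)<0$ define $$\mathrm{cost}(U)=\mathrm{tr}\Big(\int_0^\infty \big(e^{(A+BU)t}\big)^{\mathrm{T}}(Q+U^{\mathrm{T}}RU)e^{(A+BU)t}\,dt\Big).$$ Let $U_*$ minimize $\mathrm{cost}(U)$ (over such $U$). Then there exist constants $\epsilon_0>0$ and $C_1$ such that for every $\Delta U\in\mathbb{R}^{p\times d}$ with $\|\Delta U\|=1$ and every $\epsilon\in[0,\epsilon_0]$, $$\mathrm{cost}(U_*+\epsilon\Delta U)-\mathrm{cost}(U_* )\le C_1\epsilon^2.$$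
   Context: $\alpha(N)=\max\{\Re(\lambda):\lambda\text{ eigenvalue of }N\}$; $\|\cdot\|$ is the spectral norm. *)

theory Defs
  imports "HOL-Analysis.Analysis"
begin

primrec mat_pow :: "real^'n^'n \<Rightarrow> nat \<Rightarrow> real^'n^'n" where
  "mat_pow M 0 = mat 1"
| "mat_pow M (Suc k) = M ** mat_pow M k"

definition mexp :: "real^'n^'n \<Rightarrow> real^'n^'n" where
  "mexp M = (\<Sum>k. (1 / fact k) *\<^sub>R mat_pow M k)"

definition complexify :: "real^'n^'m \<Rightarrow> complex^'n^'m" where
  "complexify M = (\<chi> i j. complex_of_real (M $ i $ j))"

definition eigenvalues :: "real^'n^'n \<Rightarrow> complex set" where
  "eigenvalues M = {c. \<exists>v::complex^'n. v \<noteq> 0 \<and> complexify M *v v = c *s v}"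

definition spectral_abscissa :: "real^'n^'n \<Rightarrow> real" where
  "spectral_abscissa N = Max (Re ` eigenvalues N)"

definition spec_norm :: "real^'n^'m \<Rightarrow> real" where
  "spec_norm M = onorm (\<lambda>x. M *v x)"

definition sym_pos_def :: "real^'n^'n \<Rightarrow> bool" where
  "sym_pos_def M \<longleftrightarrow> transpose M = M \<and> (\<forall>x. x \<noteq> 0 \<longrightarrow> x \<bullet> (M *v x) > 0)"

definition lqr_cost :: "real^'d^'d \<Rightarrow> real^'p^'d \<Rightarrow> real^'d^'d \<Rightarrow> real^'p^'p \<Rightarrow> real^'d^'p \<Rightarrow> real" where
  "lqr_cost A B Q R U = trace (integral {0..}
      (\<lambda>t::real. transpose (mexp (t *\<^sub>R (A + B ** U))) ** (Q + transpose U ** R ** U)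
                 ** mexp (t *\<^sub>R (A + B ** U))))"

end

(* For a stabilising feedback U the cost equals trace ((Q + U^T R U) ** gramian (A + B U)), where the
   Gramian solves a Lyapunov equation. Comparing the Lyapunov equations of A + B U* and A + B (U* + D)
   writes cost (U* + D) - cost U* as a term linear in D plus a remainder bounded by K |D|^2, uniformly
   for small D: exponential stability survives small perturbations because the Lyapunov function of
   A + B U* remains one for the perturbed matrix. Nearby feedbacks are therefore admissible, so
   minimality of U* forces the linear term to vanish, and only the quadratic bound is left.
   Exponential stability and negativity of the spectral abscissa are related through an annihilating
   polynomial of the matrix, factored into linear factors over the complex numbers. *)

theory Submission
  imports Defs "HOL-Computational_Algebra.Fundamental_Theorem_Algebra"
begin

subsection \<open>Matrix algebra\<close>

lemma matrix_add_rdistrib: "((A::'a::semiring_1^'k^'m) + B) ** (C::'a^'n^'k) = A ** C + B ** C"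
  by (simp add: matrix_matrix_mult_def vec_eq_iff sum.distrib ring_distribs)

lemma matrix_diff_ldistrib: "(A::'a::ring_1^'k^'m) ** ((B::'a^'n^'k) - C) = A ** B - A ** C"
  by (simp add: matrix_matrix_mult_def vec_eq_iff sum_subtractf ring_distribs)

lemma matrix_diff_rdistrib: "((A::'a::ring_1^'k^'m) - B) ** (C::'a^'n^'k) = A ** C - B ** C"
  by (simp add: matrix_matrix_mult_def vec_eq_iff sum_subtractf ring_distribs)

lemma matrix_mult_uminus_left: "(- (A::'a::ring_1^'k^'m)) ** (B::'a^'n^'k) = - (A ** B)"
  by (simp add: matrix_matrix_mult_def vec_eq_iff sum_negf)

lemma matrix_mult_uminus_right: "(A::'a::ring_1^'k^'m) ** (- (B::'a^'n^'k)) = - (A ** B)"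
  by (simp add: matrix_matrix_mult_def vec_eq_iff sum_negf)

lemma matrix_mult_sum_right: "(A::'a::semiring_1^'k^'m) ** sum f S = (\<Sum>i\<in>S. A ** (f i :: 'a^'n^'k))"
  by (induction S rule: infinite_finite_induct) (simp_all add: matrix_add_ldistrib)

lemma mat_mult_left: "mat c ** (A::'a::semiring_1^'n^'m) = (\<chi> i j. c * A$i$j)"
  by (simp add: matrix_matrix_mult_def mat_def vec_eq_iff if_distrib if_distribR sum.delta cong: if_cong)

lemma mat_mult_commute: "mat c ** (A::'a::comm_semiring_1^'k^'m) = A ** mat c"
  by (simp add: mat_mult_left matrix_matrix_mult_def mat_def vec_eq_iff if_distrib if_distribR
      sum.delta' mult.commute cong: if_cong)

lemma mat_mult_left_commute: "mat c ** ((A::'a::comm_semiring_1^'k^'m) ** B) = A ** (mat c ** B)"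
  by (metis matrix_mul_assoc mat_mult_commute)

lemma mat_mult_mat: "mat a ** mat b = (mat (a * b) :: 'a::semiring_1^'n^'n)"
  by (subst mat_mult_left) (simp add: vec_eq_iff mat_def)

lemma mat_add: "mat (a + b) = (mat a + mat b :: 'a::semiring_1^'n^'n)"
  by (simp add: vec_eq_iff mat_def)

lemma mat_one_neq_zero: "(mat 1 :: 'a::zero_neq_one^'n^'n) \<noteq> 0"
proof
  assume "(mat 1 :: 'a^'n^'n) = 0"
  then have "(mat 1 :: 'a^'n^'n) $ undefined $ undefined = 0" by simp
  then show False by (simp add: mat_def)
qed

lemma mat_matrix_vector_mult: "mat c *v (v::'a::semiring_1^'n) = c *s v"
  by (simp add: matrix_vector_mult_def mat_def vec_eq_iff if_distrib if_distribR sum.delta cong: if_cong)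

lemma matrix_vector_mult_scalar: "(A::'a::comm_semiring_1^'n^'m) *v (c *s v) = c *s (A *v v)"
  by (simp add: matrix_vector_mult_def vec_eq_iff sum_distrib_left algebra_simps)

lemma transpose_add: "transpose ((A::'a::plus^'n^'m) + B) = transpose A + transpose B"
  by (simp add: transpose_def vec_eq_iff)

lemma trace_scaleR: "trace (c *\<^sub>R (A::real^'n^'n)) = c * trace A"
  by (simp add: trace_def sum_distrib_left)

lemma trace_uminus: "trace (- (A::'a::ring_1^'n^'n)) = - trace A"
  by (simp add: trace_def sum_negf)

lemma bounded_linear_matrix_mult_left:
  "bounded_linear (\<lambda>X::'a::{euclidean_space,real_algebra_1}^'n^'k. (M::'a^'k^'m) ** X)"
  by (rule linear_conv_bounded_linear[THEN iffD1], rule linearI)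
     (simp_all add: matrix_add_ldistrib matrix_scalar_ac scalar_matrix_assoc)

lemma bounded_linear_matrix_mult_right:
  "bounded_linear (\<lambda>X::'a::{euclidean_space,real_algebra_1}^'k^'m. X ** (M::'a^'n^'k))"
  by (rule linear_conv_bounded_linear[THEN iffD1], rule linearI)
     (simp_all add: matrix_add_rdistrib scalar_matrix_assoc)

lemma bounded_linear_matrix_entry: "bounded_linear (\<lambda>X::'a::real_normed_vector^'n^'m. X $ i $ j)"
  using bounded_linear_compose[OF bounded_linear_vec_nth bounded_linear_vec_nth] .

lemma bounded_linear_matrix_vector_mult_left:
  "bounded_linear (\<lambda>X::'a::{euclidean_space,real_algebra_1}^'n^'m. X *v x)"
  by (rule linear_conv_bounded_linear[THEN iffD1], rule linearI)
     (simp_all add: matrix_vector_mult_def vec_eq_iff scaleR_sum_right ring_distribs sum.distrib)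

lemma bounded_bilinear_matrix_mult: "bounded_bilinear (\<lambda>(A::real^'n^'n) (B::real^'n^'n). A ** B)"
  unfolding bilinear_conv_bounded_bilinear[symmetric] bilinear_def
  using bounded_linear_matrix_mult_left bounded_linear_matrix_mult_right
  by (auto intro: bounded_linear.linear)

subsection \<open>The Frobenius norm\<close>

lemma norm_matrix_sq: "norm (A::real^'n^'m)^2 = (\<Sum>i\<in>UNIV. \<Sum>j\<in>UNIV. (A$i$j)^2)"
  by (simp add: norm_vec_def L2_set_def sum_nonneg)

lemma norm_matrix_sq_columns: "norm (A::real^'n^'m)^2 = (\<Sum>j\<in>UNIV. norm (A *v axis j 1)^2)"
proof -
  have "(A *v axis j 1) $ i = A $ i $ j" for i j
    by (simp add: matrix_vector_mul_component inner_axis)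
  then show ?thesis
    by (simp add: norm_matrix_sq norm_vec_def L2_set_def sum_nonneg) (rule sum.swap)
qed

lemma norm_transpose: "norm (transpose (A::real^'n^'m)) = norm A"
proof -
  have "norm (transpose A)^2 = norm A^2"
    unfolding norm_matrix_sq by (simp add: transpose_def) (rule sum.swap)
  then show ?thesis by (simp add: power2_eq_iff_nonneg)
qed

lemma norm_matrix_vector_mult_le: "norm ((A::real^'n^'m) *v x) \<le> norm A * norm x"
proof -
  have "norm (A *v x)^2 = (\<Sum>i\<in>UNIV. (A$i \<bullet> x)^2)"
    by (simp add: norm_vec_def L2_set_def sum_nonneg matrix_vector_mul_component)
  also have "\<dots> \<le> (\<Sum>i\<in>UNIV. norm (A$i)^2 * norm x^2)"
  proof (rule sum_mono)
    fix i
    have "\<bar>A$i \<bullet> x\<bar>^2 \<le> (norm (A$i) * norm x)^2"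
      by (intro power_mono Cauchy_Schwarz_ineq2) simp
    then show "(A$i \<bullet> x)^2 \<le> norm (A$i)^2 * norm x^2" by (simp add: power_mult_distrib)
  qed
  also have "\<dots> = (norm A * norm x)^2"
    by (simp add: norm_vec_def L2_set_def sum_nonneg sum_distrib_right power_mult_distrib)
  finally show ?thesis
    by (rule power2_le_imp_le) simp
qed

lemma norm_matrix_mult_le: "norm ((A::real^'k^'m) ** (B::real^'n^'k)) \<le> norm A * norm B"
proof -
  have "norm (A ** B)^2 = (\<Sum>j\<in>UNIV. norm (A *v (B *v axis j 1))^2)"
    by (simp add: norm_matrix_sq_columns matrix_vector_mul_assoc)
  also have "\<dots> \<le> (\<Sum>j\<in>UNIV. norm A^2 * norm (B *v axis j 1)^2)"
  proof (rule sum_mono)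
    fix j
    show "norm (A *v (B *v axis j 1))^2 \<le> norm A^2 * norm (B *v axis j 1)^2"
      using power_mono[OF norm_matrix_vector_mult_le[of A "B *v axis j 1"] norm_ge_zero, of 2]
      by (simp add: power_mult_distrib)
  qed
  also have "\<dots> = (norm A * norm B)^2"
    by (simp add: norm_matrix_sq_columns[of B] sum_distrib_left power_mult_distrib)
  finally show ?thesis
    by (rule power2_le_imp_le) simp
qed

lemma norm_transpose_mult_mult_le:
  "norm (transpose (X::real^'a^'b) ** (R::real^'b^'b) ** (Y::real^'c^'b)) \<le> norm X * norm R * norm Y"
proof -
  have "norm (transpose X ** R ** Y) \<le> norm (transpose X ** R) * norm Y"
    by (rule norm_matrix_mult_le)
  also have "\<dots> \<le> norm X * norm R * norm Y"
    using norm_matrix_mult_le[of "transpose X" R] by (simp add: norm_transpose mult_right_mono)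
  finally show ?thesis .
qed

lemma norm_mult_add_transpose_mult_le:
  "norm (P ** (E::real^'n^'n) + transpose E ** P) \<le> 2 * norm P * norm E"
  using norm_matrix_mult_le[of P E] norm_matrix_mult_le[of "transpose E" P]
  by (intro order_trans[OF norm_triangle_ineq]) (simp add: norm_transpose algebra_simps)

lemma abs_inner_matrix_vector_le: "\<bar>x \<bullet> ((A::real^'n^'n) *v x)\<bar> \<le> norm A * norm x ^ 2"
proof -
  have "\<bar>x \<bullet> (A *v x)\<bar> \<le> norm x * norm (A *v x)" by (rule Cauchy_Schwarz_ineq2)
  also have "\<dots> \<le> norm x * (norm A * norm x)"
    by (intro mult_left_mono norm_matrix_vector_mult_le) simp
  finally show ?thesis by (simp add: power2_eq_square mult_ac)
qed

lemma abs_trace_le: "\<bar>trace (A::real^'n^'n)\<bar> \<le> real CARD('n) * norm A"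
proof -
  have "\<bar>trace A\<bar> \<le> (\<Sum>i\<in>UNIV. \<bar>A$i$i\<bar>)" unfolding trace_def by (rule sum_abs)
  also have "\<dots> \<le> (\<Sum>i\<in>(UNIV::'n set). norm A)"
    by (intro sum_mono order_trans[OF component_le_norm_cart Finite_Cartesian_Product.norm_nth_le])
  finally show ?thesis by simp
qed

lemma abs_trace_mult_le: "\<bar>trace ((A::real^'n^'n) ** B)\<bar> \<le> real CARD('n) * (norm A * norm B)"
  by (rule order_trans[OF abs_trace_le]) (simp add: norm_matrix_mult_le)

lemma norm_matrix_le_entrywise:
  assumes "\<And>i j. \<bar>(A::real^'n^'m) $ i $ j\<bar> \<le> K"
  shows "norm A \<le> real CARD('m) * real CARD('n) * K"
proof -
  have "norm A \<le> (\<Sum>i\<in>UNIV. norm (A$i))"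
    unfolding norm_vec_def by (rule L2_set_le_sum) auto
  also have "\<dots> \<le> (\<Sum>i\<in>UNIV. \<Sum>j\<in>UNIV. \<bar>A$i$j\<bar>)"
    by (intro sum_mono norm_le_l1_cart)
  also have "\<dots> \<le> (\<Sum>i\<in>(UNIV::'m set). \<Sum>j\<in>(UNIV::'n set). K)"
    by (intro sum_mono assms)
  finally show ?thesis by simp
qed

lemma norm_le_sqrt_card_spec_norm: "norm (A::real^'n^'m) \<le> sqrt (real CARD('n)) * spec_norm A"
proof -
  have "norm A ^ 2 = (\<Sum>j\<in>UNIV. norm (A *v axis j 1) ^ 2)" by (rule norm_matrix_sq_columns)
  also have "\<dots> \<le> (\<Sum>j\<in>(UNIV::'n set). spec_norm A ^ 2)"
  proof (intro sum_mono power_mono)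
    fix j :: 'n
    show "norm (A *v axis j 1) \<le> spec_norm A"
      using onorm[OF matrix_vector_mul_bounded_linear[of A], of "axis j 1"] by (simp add: spec_norm_def)
  qed simp
  also have "\<dots> = (sqrt (real CARD('n)) * spec_norm A) ^ 2"
    by (simp add: power_mult_distrib)
  finally show ?thesis
    by (rule power2_le_imp_le) (simp add: spec_norm_def onorm_pos_le)
qed

subsection \<open>The matrix exponential\<close>

lemma mat_pow_commute: "mat_pow M k ** M = M ** mat_pow M k"
  by (induction k) (simp_all add: matrix_mul_assoc[symmetric])

lemma mat_pow_scaleR: "mat_pow (t *\<^sub>R M) k = t^k *\<^sub>R mat_pow M k"
  by (induction k) (simp_all add: scalar_matrix_assoc[symmetric] matrix_scalar_ac)

lemma mat_pow_transpose: "transpose (mat_pow M k) = mat_pow (transpose M) k"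
  by (induction k) (simp_all add: matrix_transpose_mul mat_pow_commute)

lemma norm_mat_pow_le: "norm (mat_pow (M::real^'n^'n) k) \<le> norm (mat 1 :: real^'n^'n) * norm M ^ k"
proof (induction k)
  case (Suc k)
  have "norm (mat_pow M (Suc k)) \<le> norm M * norm (mat_pow M k)"
    by (simp add: norm_matrix_mult_le)
  also have "\<dots> \<le> norm M * (norm (mat 1 :: real^'n^'n) * norm M ^ k)"
    by (intro mult_left_mono Suc.IH) simp
  finally show ?case by (simp add: mult_ac)
qed simp

lemma summable_mexp_series: "summable (\<lambda>k. (t^k / fact k) *\<^sub>R mat_pow (M::real^'n^'n) k)"
proof (rule summable_comparison_test)
  show "\<exists>N. \<forall>k\<ge>N. norm ((t^k / fact k) *\<^sub>R mat_pow M k)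
      \<le> norm (mat 1 :: real^'n^'n) * (inverse (fact k) * (\<bar>t\<bar> * norm M) ^ k)"
  proof (intro exI allI impI)
    fix k :: nat
    have "norm ((t^k / fact k) *\<^sub>R mat_pow M k) = \<bar>t\<bar>^k * norm (mat_pow M k) / fact k"
      by (simp add: power_abs)
    also have "\<dots> \<le> \<bar>t\<bar>^k * (norm (mat 1 :: real^'n^'n) * norm M ^ k) / fact k"
      by (intro divide_right_mono mult_left_mono norm_mat_pow_le) auto
    finally show "norm ((t^k / fact k) *\<^sub>R mat_pow M k)
        \<le> norm (mat 1 :: real^'n^'n) * (inverse (fact k) * (\<bar>t\<bar> * norm M) ^ k)"
      by (simp add: field_simps power_mult_distrib)
  qed
  show "summable (\<lambda>k. norm (mat 1 :: real^'n^'n) * (inverse (fact k) * (\<bar>t\<bar> * norm M) ^ k))"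
    by (intro summable_mult summable_exp)
qed

lemma mexp_scaleR_eq: "mexp (t *\<^sub>R M) = (\<Sum>k. (t^k / fact k) *\<^sub>R mat_pow M k)"
  by (simp add: mexp_def mat_pow_scaleR)

lemma mexp_zero [simp]: "mexp 0 = (mat 1 :: real^'n^'n)"
proof -
  have "mexp (0 *\<^sub>R (0::real^'n^'n)) = (\<Sum>k. if k = 0 then mat 1 else 0)"
    unfolding mexp_scaleR_eq by (rule suminf_cong) simp
  then show ?thesis
    using sums_single[of 0 "\<lambda>_. mat 1 :: real^'n^'n"] by (simp add: sums_iff)
qed

lemma mexp_commute: "M ** mexp (t *\<^sub>R M) = mexp (t *\<^sub>R M) ** M"
proof -
  have "M ** mexp (t *\<^sub>R M) = (\<Sum>k. M ** ((t^k / fact k) *\<^sub>R mat_pow M k))"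
    unfolding mexp_scaleR_eq
    by (rule bounded_linear.suminf[OF bounded_linear_matrix_mult_left summable_mexp_series])
  also have "\<dots> = (\<Sum>k. ((t^k / fact k) *\<^sub>R mat_pow M k) ** M)"
    by (simp add: matrix_scalar_ac scalar_matrix_assoc[symmetric] mat_pow_commute)
  also have "\<dots> = mexp (t *\<^sub>R M) ** M"
    unfolding mexp_scaleR_eq
    by (rule bounded_linear.suminf[OF bounded_linear_matrix_mult_right summable_mexp_series, symmetric])
  finally show ?thesis .
qed

lemma transpose_mexp: "transpose (mexp (t *\<^sub>R M)) = mexp (t *\<^sub>R transpose M)"
proof -
  have "bounded_linear (transpose :: real^'n^'n \<Rightarrow> real^'n^'n)"
    by (rule linear_conv_bounded_linear[THEN iffD1], rule linearI)
       (simp_all add: transpose_add transpose_scalar)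
  then show ?thesis unfolding mexp_scaleR_eq
    by (subst bounded_linear.suminf[OF _ summable_mexp_series]) (simp_all add: transpose_scalar mat_pow_transpose)
qed

lemma has_vector_derivative_vec_componentwise:
  fixes f :: "real \<Rightarrow> 'a::real_normed_vector^'n"
  assumes "\<And>i. ((\<lambda>t. f t $ i) has_vector_derivative f' $ i) F"
  shows "(f has_vector_derivative f') F"
proof -
  let ?L = "Lim F (\<lambda>x. x)"
  have "\<And>i. ((\<lambda>y. ((f y $ i - f ?L $ i) - (y - ?L) *\<^sub>R f' $ i) /\<^sub>R norm (y - ?L)) \<longlongrightarrow> 0) F"
    using assms unfolding has_vector_derivative_def has_derivative_def by blast
  then have "((\<lambda>y. \<chi> i. ((f y $ i - f ?L $ i) - (y - ?L) *\<^sub>R f' $ i) /\<^sub>R norm (y - ?L)) \<longlongrightarrow> (\<chi> i. 0)) F"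
    by (rule tendsto_vec_lambda)
  moreover have "(\<lambda>y. \<chi> i. ((f y $ i - f ?L $ i) - (y - ?L) *\<^sub>R f' $ i) /\<^sub>R norm (y - ?L))
      = (\<lambda>y. ((f y - f ?L) - (y - ?L) *\<^sub>R f') /\<^sub>R norm (y - ?L))"
    by (rule ext) (simp add: vec_eq_iff)
  ultimately have "((\<lambda>y. ((f y - f ?L) - (y - ?L) *\<^sub>R f') /\<^sub>R norm (y - ?L)) \<longlongrightarrow> 0) F"
    by (simp add: zero_vec_def)
  then show ?thesis
    unfolding has_vector_derivative_def has_derivative_def
    by (simp add: bounded_linear_scaleR_left)
qed

lemma has_vector_derivative_matrix_entrywise:
  fixes f :: "real \<Rightarrow> real^'n^'m"
  assumes "\<And>i j. ((\<lambda>t. f t $ i $ j) has_real_derivative f' $ i $ j) F"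
  shows "(f has_vector_derivative f') F"
  using assms
  by (intro has_vector_derivative_vec_componentwise) (simp add: has_real_derivative_iff_has_vector_derivative)

lemma mexp_entry_eq_power_series: "mexp (t *\<^sub>R M) $ i $ j = (\<Sum>k. (mat_pow M k $ i $ j / fact k) * t^k)"
  unfolding mexp_scaleR_eq
  by (subst bounded_linear.suminf[OF bounded_linear_matrix_entry summable_mexp_series])
     (auto intro!: suminf_cong)

lemma matrix_mult_mexp_entry_eq_power_series:
  "(M ** mexp (t *\<^sub>R M)) $ i $ j = (\<Sum>k. (mat_pow M (Suc k) $ i $ j / fact k) * t^k)"
proof -
  have series: "(\<lambda>k. M ** ((t^k / fact k) *\<^sub>R mat_pow M k)) = (\<lambda>k. (t^k / fact k) *\<^sub>R mat_pow M (Suc k))"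
    by (simp add: matrix_scalar_ac scalar_matrix_assoc[symmetric])
  have "M ** mexp (t *\<^sub>R M) = (\<Sum>k. (t^k / fact k) *\<^sub>R mat_pow M (Suc k))"
    unfolding mexp_scaleR_eq series[symmetric]
    by (rule bounded_linear.suminf[OF bounded_linear_matrix_mult_left summable_mexp_series])
  moreover have "summable (\<lambda>k. (t^k / fact k) *\<^sub>R mat_pow M (Suc k))"
    using bounded_linear.summable[OF bounded_linear_matrix_mult_left[of M] summable_mexp_series[of t M]]
    by (simp only: series)
  ultimately show ?thesis
    by (simp add: bounded_linear.suminf[OF bounded_linear_matrix_entry] mult.commute)
qed

lemma has_vector_derivative_mexp:
  "((\<lambda>t. mexp (t *\<^sub>R M)) has_vector_derivative (M ** mexp (t *\<^sub>R M))) (at t within S)"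
proof (rule has_vector_derivative_matrix_entrywise)
  fix i j
  define c where "c k = mat_pow M k $ i $ j / fact k" for k
  have "summable (\<lambda>k. c k * y ^ k)" for y :: real
    using bounded_linear.summable[OF bounded_linear_matrix_entry summable_mexp_series, of y M i j]
    by (simp add: c_def mult.commute)
  then have "((\<lambda>t. \<Sum>k. c k * t^k) has_real_derivative (\<Sum>k. diffs c k * t^k)) (at t)"
    by (rule termdiffs_strong_converges_everywhere)
  moreover have "diffs c k = mat_pow M (Suc k) $ i $ j / fact k" for k
    by (simp add: diffs_def c_def del: mat_pow.simps)
  ultimately show "((\<lambda>t. mexp (t *\<^sub>R M) $ i $ j) has_real_derivative (M ** mexp (t *\<^sub>R M)) $ i $ j) (at t within S)"
    by (simp add: mexp_entry_eq_power_series matrix_mult_mexp_entry_eq_power_series c_def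
        has_field_derivative_at_within del: mat_pow.simps)
qed

subsection \<open>Eigenvalues and the annihilating polynomial\<close>

lemma complexify_mult: "complexify ((A::real^'k^'m) ** (B::real^'n^'k)) = complexify A ** complexify B"
  by (simp add: complexify_def matrix_matrix_mult_def vec_eq_iff)

lemma complexify_add: "complexify (A + B) = complexify A + complexify B"
  by (simp add: complexify_def vec_eq_iff)

lemma complexify_zero [simp]: "complexify 0 = 0"
  by (simp add: complexify_def vec_eq_iff)

lemma complexify_mat [simp]: "complexify (mat c :: real^'n^'n) = mat (complex_of_real c)"
  by (simp add: complexify_def mat_def vec_eq_iff)

lemma complexify_scaleR: "complexify (c *\<^sub>R A) = mat (complex_of_real c) ** complexify A"
  by (simp add: complexify_def mat_mult_left vec_eq_iff)

lemma complexify_sum: "complexify (sum f S) = (\<Sum>i\<in>S. complexify (f i))"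
  by (induction S rule: infinite_finite_induct) (simp_all add: complexify_add)

lemma bounded_linear_complexify: "bounded_linear (complexify :: real^'n^'m \<Rightarrow> complex^'n^'m)"
proof -
  have "complexify (r *\<^sub>R X) = r *\<^sub>R complexify X" for r and X :: "real^'n^'m"
    by (simp add: complexify_def vec_eq_iff) (simp add: scaleR_conv_of_real)
  then show ?thesis
    by (intro linear_conv_bounded_linear[THEN iffD1] linearI) (simp_all add: complexify_add)
qed

definition poly_mat :: "complex poly \<Rightarrow> real^'n^'n \<Rightarrow> complex^'n^'n" where
  "poly_mat q M = (\<Sum>k\<le>degree q. mat (coeff q k) ** complexify (mat_pow M k))"

lemma poly_mat_eq_sum:
  assumes "degree q \<le> K"
  shows "poly_mat q M = (\<Sum>k\<le>K. mat (coeff q k) ** complexify (mat_pow M k))"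
  unfolding poly_mat_def
  by (rule sum.mono_neutral_left) (use assms in \<open>auto simp: coeff_eq_0\<close>)

lemma poly_mat_add: "poly_mat (p + q) M = poly_mat p M + poly_mat q M"
proof -
  define K where "K = max (degree p) (degree q)"
  have "degree (p + q) \<le> K" "degree p \<le> K" "degree q \<le> K"
    by (auto simp: K_def degree_add_le)
  then show ?thesis
    by (simp add: poly_mat_eq_sum[of _ K] mat_add matrix_add_rdistrib sum.distrib)
qed

lemma poly_mat_smult: "poly_mat (smult c q) M = mat c ** poly_mat q M"
  by (simp add: poly_mat_eq_sum[of "smult c q" "degree q"] poly_mat_def matrix_mult_sum_right
      matrix_mul_assoc mat_mult_mat)

lemma poly_mat_pCons_0: "poly_mat (pCons 0 q) M = complexify M ** poly_mat q M"
proof -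
  have "poly_mat (pCons 0 q) M = (\<Sum>k\<le>Suc (degree q). mat (coeff (pCons 0 q) k) ** complexify (mat_pow M k))"
    by (rule poly_mat_eq_sum) simp
  also have "\<dots> = (\<Sum>k\<le>degree q. mat (coeff q k) ** (complexify M ** complexify (mat_pow M k)))"
    by (subst sum.atMost_Suc_shift) (simp add: complexify_mult)
  also have "\<dots> = complexify M ** poly_mat q M"
    by (simp add: poly_mat_def matrix_mult_sum_right mat_mult_left_commute)
  finally show ?thesis .
qed

lemma poly_mat_linear_factor:
  "poly_mat ([:-\<mu>, 1:] * r) M = (complexify M - mat \<mu>) ** poly_mat r M"
proof -
  have "[:-\<mu>, 1:] * r = smult (-\<mu>) r + pCons 0 r"
    by (simp add: mult_pCons_left)
  then have "poly_mat ([:-\<mu>, 1:] * r) M = mat (-\<mu>) ** poly_mat r M + complexify M ** poly_mat r M"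
    by (simp only: poly_mat_add poly_mat_smult poly_mat_pCons_0)
  also have "mat (-\<mu>) ** poly_mat r M = - (mat \<mu> ** poly_mat r M)"
    by (simp add: mat_mult_left vec_eq_iff)
  finally show ?thesis
    by (simp add: matrix_diff_rdistrib)
qed

primrec linear_factor_prod :: "complex^'n^'n \<Rightarrow> complex list \<Rightarrow> complex^'n^'n" where
  "linear_factor_prod N [] = mat 1"
| "linear_factor_prod N (\<mu> # \<mu>s) = (N - mat \<mu>) ** linear_factor_prod N \<mu>s"

lemma poly_mat_prod_linear_factors:
  "poly_mat (prod_list (map (\<lambda>\<mu>. [:-\<mu>, 1:]) \<mu>s)) M = linear_factor_prod (complexify M) \<mu>s"
proof (induction \<mu>s)
  case Nil
  then show ?case by (simp add: poly_mat_def)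
next
  case (Cons \<mu> \<mu>s)
  then show ?case by (simp add: poly_mat_linear_factor del: mult_pCons_left)
qed

lemma linear_factor_prod_commute: "linear_factor_prod N \<mu>s ** (N - mat \<nu>) = (N - mat \<nu>) ** linear_factor_prod N \<mu>s"
proof (induction \<mu>s)
  case (Cons \<mu> \<mu>s)
  have linear_factors_commute: "(N - mat \<mu>) ** (N - mat \<nu>) = (N - mat \<nu>) ** (N - mat \<mu>)"
    by (simp add: matrix_diff_ldistrib matrix_diff_rdistrib mat_mult_commute[of _ N] mat_mult_mat
        mult.commute)
  have "linear_factor_prod N (\<mu> # \<mu>s) ** (N - mat \<nu>) = ((N - mat \<mu>) ** (N - mat \<nu>)) ** linear_factor_prod N \<mu>s"
    by (simp add: Cons.IH matrix_mul_assoc[symmetric])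
  then show ?case
    by (simp add: linear_factors_commute matrix_mul_assoc)
qed simp

lemma linear_factor_prod_commute_self: "linear_factor_prod N \<mu>s ** N = N ** linear_factor_prod N \<mu>s"
  using linear_factor_prod_commute[of N \<mu>s 0] by simp

definition is_eigenvalue :: "complex^'n^'n \<Rightarrow> complex \<Rightarrow> bool" where
  "is_eigenvalue N \<mu> \<longleftrightarrow> (\<exists>v. v \<noteq> 0 \<and> N *v v = \<mu> *s v)"

lemma eigenvalues_eq: "eigenvalues M = {\<mu>. is_eigenvalue (complexify M) \<mu>}"
  by (simp add: eigenvalues_def is_eigenvalue_def)

lemma non_eigenvalue_factor_cancel:
  assumes "(N - mat \<mu>) ** Y = 0" "\<not> is_eigenvalue N \<mu>"
  shows "Y = (0::complex^'m^'n)"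
proof -
  have "column j Y = 0" for j
  proof -
    have "(N - mat \<mu>) *v column j Y = 0"
      using assms(1) by (simp add: column_def matrix_matrix_mult_def matrix_vector_mult_def vec_eq_iff)
    then have "N *v column j Y = \<mu> *s column j Y"
      by (simp add: matrix_vector_mult_diff_rdistrib mat_matrix_vector_mult)
    then show ?thesis using assms(2) unfolding is_eigenvalue_def by blast
  qed
  then show ?thesis
    by (simp add: column_def vec_eq_iff)
qed

lemma linear_factor_prod_filter_eigenvalues:
  "linear_factor_prod N \<mu>s ** Z = 0 \<Longrightarrow> linear_factor_prod N (filter (is_eigenvalue N) \<mu>s) ** Z = 0"
proof (induction \<mu>s arbitrary: Z)
  case (Cons \<mu> \<mu>s)
  show ?case
  proof (cases "is_eigenvalue N \<mu>")
    case True
    have "linear_factor_prod N \<mu>s ** ((N - mat \<mu>) ** Z) = 0"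
      using Cons.prems by (simp add: matrix_mul_assoc linear_factor_prod_commute)
    then have "linear_factor_prod N (filter (is_eigenvalue N) \<mu>s) ** ((N - mat \<mu>) ** Z) = 0"
      by (rule Cons.IH)
    with True show ?thesis
      by (simp add: matrix_mul_assoc linear_factor_prod_commute)
  next
    case False
    have "(N - mat \<mu>) ** (linear_factor_prod N \<mu>s ** Z) = 0"
      using Cons.prems by (simp add: matrix_mul_assoc)
    then have "linear_factor_prod N \<mu>s ** Z = 0"
      using False by (rule non_eigenvalue_factor_cancel)
    with False show ?thesis
      by (simp add: Cons.IH)
  qed
qed simp

lemma linear_factor_prod_eigenvector:
  assumes "N *v v = c *s v"
  shows "linear_factor_prod N \<mu>s *v v = prod_list (map (\<lambda>\<mu>. c - \<mu>) \<mu>s) *s v"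
proof (induction \<mu>s)
  case (Cons \<mu> \<mu>s)
  have "linear_factor_prod N (\<mu> # \<mu>s) *v v = prod_list (map (\<lambda>\<mu>. c - \<mu>) \<mu>s) *s ((N - mat \<mu>) *v v)"
    by (simp add: Cons.IH matrix_vector_mul_assoc[symmetric] matrix_vector_mult_scalar)
  also have "(N - mat \<mu>) *v v = (c - \<mu>) *s v"
    using assms by (simp only: matrix_vector_mult_diff_rdistrib mat_matrix_vector_mult vector_sub_rdistrib)
  finally show ?case
    by (simp only: vector_smult_assoc list.map prod_list.Cons mult.commute)
qed simp

lemma mat_pow_linear_dependent:
  fixes M :: "real^'n^'n"
  obtains c K where "\<exists>k\<le>K. c k \<noteq> 0" and "(\<Sum>k\<le>K. c k *\<^sub>R mat_pow M k) = 0"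
proof (cases "inj_on (mat_pow M) {..CARD('n) * CARD('n)}")
  case True
  define N where "N = CARD('n) * CARD('n)"
  have "\<not> independent (mat_pow M ` {..N})"
  proof
    assume "independent (mat_pow M ` {..N})"
    then have "card (mat_pow M ` {..N}) \<le> DIM(real^'n^'n)"
      by (rule independent_bound[THEN conjunct2])
    then show False
      using True by (simp add: N_def card_image)
  qed
  then obtain u where u: "\<exists>v\<in>mat_pow M ` {..N}. u v \<noteq> 0" "(\<Sum>v\<in>mat_pow M ` {..N}. u v *\<^sub>R v) = 0"
    unfolding real_vector.dependent_finite[OF finite_imageI[OF finite_atMost]] by blast
  moreover have "(\<Sum>v\<in>mat_pow M ` {..N}. u v *\<^sub>R v) = (\<Sum>k\<le>N. u (mat_pow M k) *\<^sub>R mat_pow M k)"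
    using True by (simp add: N_def sum.reindex)
  ultimately show ?thesis
    using that[of N "u \<circ> mat_pow M"] by auto
next
  case False
  then obtain i j where ij: "i \<noteq> j" "mat_pow M i = mat_pow M j"
    unfolding inj_on_def by blast
  define c where "c k = (if k = i then 1 else if k = j then -1 else (0::real))" for k
  have "(\<Sum>k\<le>max i j. c k *\<^sub>R mat_pow M k) = (\<Sum>k\<in>{i, j}. c k *\<^sub>R mat_pow M k)"
    by (rule sum.mono_neutral_right) (auto simp: c_def)
  also have "\<dots> = 0"
    using ij by (simp add: c_def)
  finally show ?thesis
    by (intro that[of "max i j" c]) (auto simp: c_def intro: exI[of _ i])
qed

lemma annihilating_linear_factors:
  fixes M :: "real^'n^'n"
  obtains \<mu>s where "linear_factor_prod (complexify M) \<mu>s = 0"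
proof -
  obtain c K where c: "\<exists>k\<le>K. c k \<noteq> 0" "(\<Sum>k\<le>K. c k *\<^sub>R mat_pow M k) = 0"
    using mat_pow_linear_dependent by blast
  define q where "q = (\<Sum>k\<le>K. monom (complex_of_real (c k)) k)"
  have coeff_q: "coeff q k = (if k \<le> K then complex_of_real (c k) else 0)" for k
    by (simp add: q_def coeff_sum coeff_monom sum.delta')
  have "q \<noteq> 0"
  proof
    assume "q = 0"
    then have "c k = 0" if "k \<le> K" for k
      using coeff_q[of k] that by simp
    with c(1) show False by blast
  qed
  have "poly_mat q M = (\<Sum>k\<le>K. mat (coeff q k) ** complexify (mat_pow M k))"
    by (rule poly_mat_eq_sum, rule degree_le) (simp add: coeff_q)
  also have "\<dots> = complexify (\<Sum>k\<le>K. c k *\<^sub>R mat_pow M k)"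
    by (simp add: complexify_sum coeff_q complexify_scaleR)
  finally have "poly_mat q M = 0"
    using c(2) by simp
  moreover obtain root where "smult (lead_coeff q) (\<Prod>i<degree q. [:-root i, 1:]) = q"
    using complex_poly_decompose' by blast
  then have "q = smult (lead_coeff q) (prod_list (map (\<lambda>\<mu>. [:-\<mu>, 1:]) (map root [0..<degree q])))"
    by (simp add: prod.distinct_set_conv_list[symmetric] atLeast_upt)
  ultimately have "mat (lead_coeff q) ** linear_factor_prod (complexify M) (map root [0..<degree q]) = 0"
    by (metis poly_mat_smult poly_mat_prod_linear_factors)
  then have "mat (1 / lead_coeff q) ** (mat (lead_coeff q) ** linear_factor_prod (complexify M) (map root [0..<degree q])) = 0"
    by simp
  then have "linear_factor_prod (complexify M) (map root [0..<degree q]) = 0"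
    using \<open>q \<noteq> 0\<close> by (simp add: matrix_mul_assoc mat_mult_mat)
  then show ?thesis
    by (rule that)
qed

lemma eigenvalue_annihilator:
  fixes M :: "real^'n^'n"
  obtains \<nu>s where "eigenvalues M = set \<nu>s" "\<nu>s \<noteq> []" "linear_factor_prod (complexify M) \<nu>s = 0"
proof -
  obtain \<mu>s where "linear_factor_prod (complexify M) \<mu>s ** mat 1 = 0"
    using annihilating_linear_factors by (metis matrix_mul_rid)
  then have annihilates: "linear_factor_prod (complexify M) (filter (is_eigenvalue (complexify M)) \<mu>s) = 0"
    using linear_factor_prod_filter_eigenvalues by fastforce
  have "eigenvalues M \<subseteq> set (filter (is_eigenvalue (complexify M)) \<mu>s)"
  proof
    fix z assume "z \<in> eigenvalues M"
    then obtain v where v: "v \<noteq> 0" "complexify M *v v = z *s v"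
      by (auto simp: eigenvalues_eq is_eigenvalue_def)
    have "prod_list (map (\<lambda>\<mu>. z - \<mu>) (filter (is_eigenvalue (complexify M)) \<mu>s)) *s v = 0"
      using linear_factor_prod_eigenvector[OF v(2)] annihilates by (metis matrix_vector_mult_0)
    then show "z \<in> set (filter (is_eigenvalue (complexify M)) \<mu>s)"
      using v(1) by (auto simp: prod_list_zero_iff vector_mul_eq_0)
  qed
  moreover have "set (filter (is_eigenvalue (complexify M)) \<mu>s) \<subseteq> eigenvalues M"
    by (auto simp: eigenvalues_eq)
  moreover have "filter (is_eigenvalue (complexify M)) \<mu>s \<noteq> []"
    using annihilates mat_one_neq_zero by force
  ultimately show ?thesis
    using that annihilates by blast
qed

lemma finite_eigenvalues: "finite (eigenvalues M)"
  by (rule eigenvalue_annihilator[of M]) simp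

lemma eigenvalues_nonempty: "eigenvalues M \<noteq> {}"
  by (rule eigenvalue_annihilator[of M]) simp

lemma spectral_abscissa_neg_iff: "spectral_abscissa M < 0 \<longleftrightarrow> (\<forall>z\<in>eigenvalues M. Re z < 0)"
proof -
  have "finite (Re ` eigenvalues M)" "Re ` eigenvalues M \<noteq> {}"
    using finite_eigenvalues eigenvalues_nonempty by auto
  then show ?thesis
    unfolding spectral_abscissa_def by (auto simp: Max_less_iff)
qed

subsection \<open>Exponential stability\<close>

definition exp_stable :: "real^'n^'n \<Rightarrow> bool" where
  "exp_stable M \<longleftrightarrow> (\<exists>C a. a > 0 \<and> (\<forall>t\<ge>0. norm (mexp (t *\<^sub>R M)) \<le> C * exp (-a*t)))"

lemma exp_stable_transpose: "exp_stable M \<Longrightarrow> exp_stable (transpose M)"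
  unfolding exp_stable_def by (simp add: transpose_mexp[symmetric] norm_transpose)

lemma norm_diff_le_exp_derivative_bound:
  fixes u :: "real \<Rightarrow> 'a::real_normed_vector"
  assumes b: "b > 0" and u': "\<And>s. (u has_vector_derivative u' s) (at s)"
    and bound: "\<And>s. 0 < s \<Longrightarrow> norm (u' s) \<le> K * exp (b * s)" and t: "t \<ge> 0"
  shows "norm (u t - u 0) \<le> K * exp (b * t) / b - K / b"
proof (cases "t = 0")
  case False
  then have "0 < t" using t by simp
  have \<phi>': "((\<lambda>s. K * exp (b * s) / b) has_vector_derivative K * exp (b * s)) (at s)" for s
  proof -
    have "((\<lambda>s. K * exp (b * s) / b) has_real_derivative K * (exp (b * s) * b) / b) (at s)"
      using b by (intro derivative_eq_intros) auto
    then show ?thesis using b by (simp add: has_real_derivative_iff_has_vector_derivative)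
  qed
  have "norm (u t - u 0) \<le> K * exp (b * t) / b - K * exp (b * 0) / b"
  proof (rule differentiable_bound_general[OF \<open>0 < t\<close>])
    show "continuous_on {0..t} u"
      by (rule continuous_at_imp_continuous_on) (meson has_vector_derivative_continuous u')
    show "continuous_on {0..t} (\<lambda>s. K * exp (b * s) / b)"
      using b by (intro continuous_intros) auto
  qed (use u' \<phi>' bound in auto)
  then show ?thesis by simp
qed simp

lemma forced_scalar_ode_duhamel_bound:
  fixes f g :: "real \<Rightarrow> complex"
  assumes b: "b > 0" "- Re \<nu> - a = b"
    and f': "\<And>t. (f has_vector_derivative (\<nu> * f t + g t)) (at t)"
    and g: "\<And>t. t \<ge> 0 \<Longrightarrow> norm (g t) \<le> K * exp (-a*t)"
    and t: "t \<ge> 0"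
  shows "norm (exp (t *\<^sub>R (-\<nu>)) * f t - f 0) \<le> K * exp (b * t) / b - K / b"
proof -
  \<comment> \<open>Variation of constants: u is f with the free dynamics exp (t \<nu>) divided out.\<close>
  define u where "u s = exp (s *\<^sub>R (-\<nu>)) * f s" for s
  have "(u has_vector_derivative exp (s *\<^sub>R (-\<nu>)) * g s) (at s)" for s
  proof -
    have "(u has_vector_derivative exp (s *\<^sub>R (-\<nu>)) * (\<nu> * f s + g s) + exp (s *\<^sub>R (-\<nu>)) * (-\<nu>) * f s) (at s)"
      unfolding u_def by (rule has_vector_derivative_mult[OF exp_scaleR_has_vector_derivative_right f'])
    then show ?thesis by (simp add: algebra_simps)
  qed
  moreover have "norm (exp (s *\<^sub>R (-\<nu>)) * g s) \<le> K * exp (b * s)" if "0 < s" for s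
  proof -
    have "Re (s *\<^sub>R (-\<nu>)) = s * (a + b)"
      by (simp flip: b(2))
    then have "norm (exp (s *\<^sub>R (-\<nu>)) * g s) = exp (s * (a + b)) * norm (g s)"
      by (simp add: norm_mult norm_exp_eq_Re)
    also have "\<dots> \<le> exp (s * (a + b)) * (K * exp (-a * s))"
      using g[of s] that by (intro mult_left_mono) auto
    also have "\<dots> = K * exp (b * s)"
      by (simp add: exp_add[symmetric] algebra_simps)
    finally show ?thesis .
  qed
  ultimately have "norm (u t - u 0) \<le> K * exp (b * t) / b - K / b"
    by (rule norm_diff_le_exp_derivative_bound[OF b(1) _ _ t])
  then show ?thesis
    by (simp add: u_def)
qed

lemma forced_scalar_ode_bound:
  fixes f g :: "real \<Rightarrow> complex"
  assumes a: "a > 0" and \<nu>: "Re \<nu> \<le> -2*a"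
    and f': "\<And>t. (f has_vector_derivative (\<nu> * f t + g t)) (at t)"
    and g: "\<And>t. t \<ge> 0 \<Longrightarrow> norm (g t) \<le> K * exp (-a*t)"
    and t: "t \<ge> 0"
  shows "norm (f t) \<le> (norm (f 0) + K / a) * exp (-a*t)"
proof -
  define b where "b = - Re \<nu> - a"
  have b: "b \<ge> a" using \<nu> by (simp add: b_def)
  have K: "K \<ge> 0" using g[of 0] order_trans[OF norm_ge_zero g[of 0]] by simp
  have b0: "b > 0" using a b by simp
  have "norm (exp (t *\<^sub>R (-\<nu>)) * f t) \<le> norm (f 0) + norm (exp (t *\<^sub>R (-\<nu>)) * f t - f 0)"
    by (rule norm_triangle_sub)
  also have "\<dots> \<le> norm (f 0) + (K * exp (b * t) / b - K / b)"
    using forced_scalar_ode_duhamel_bound[OF b0 b_def[symmetric] f' g t] by simp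
  also have "\<dots> \<le> norm (f 0) + K * exp (b * t) / b"
    using divide_nonneg_pos[OF K b0] by linarith
  finally have bound: "norm (exp (t *\<^sub>R (-\<nu>)) * f t) \<le> norm (f 0) + K * exp (b * t) / b" .
  have "f t = exp (t *\<^sub>R \<nu>) * (exp (t *\<^sub>R (-\<nu>)) * f t)"
    by (simp add: mult.assoc[symmetric] flip: exp_add)
  then have "norm (f t) = norm (exp (t *\<^sub>R \<nu>)) * norm (exp (t *\<^sub>R (-\<nu>)) * f t)"
    by (metis norm_mult)
  also have "\<dots> = exp (-(a + b) * t) * norm (exp (t *\<^sub>R (-\<nu>)) * f t)"
    by (simp only: norm_exp_eq_Re b_def) simp
  also have "\<dots> \<le> exp (-(a + b) * t) * (norm (f 0) + K * exp (b * t) / b)"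
    by (rule mult_left_mono[OF bound]) simp
  also have "\<dots> = exp (-(a + b) * t) * norm (f 0) + K * exp (-a*t) / b"
    by (simp add: algebra_simps flip: exp_add)
  also have "\<dots> \<le> exp (-a*t) * norm (f 0) + K * exp (-a*t) / a"
    using a b t K mult_nonneg_nonneg[of b t]
    by (intro add_mono mult_right_mono divide_left_mono) (auto simp: algebra_simps)
  finally show ?thesis
    by (simp add: algebra_simps)
qed

lemma has_vector_derivative_complexify_mexp:
  "((\<lambda>t. complexify (mexp (t *\<^sub>R M))) has_vector_derivative complexify M ** complexify (mexp (t *\<^sub>R M))) (at t)"
  using bounded_linear.has_vector_derivative[OF bounded_linear_complexify has_vector_derivative_mexp[of M t UNIV]]
  by (simp add: complexify_mult)

definition entries_decay :: "(real \<Rightarrow> complex^'n^'m) \<Rightarrow> real \<Rightarrow> bool" where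
  "entries_decay F a \<longleftrightarrow> (\<exists>K. \<forall>t\<ge>0. \<forall>i j. norm (F t $ i $ j) \<le> K * exp (-a*t))"

lemma entries_decay_linear_factor_prod_mexp_Cons:
  fixes M :: "real^'n^'n"
  assumes a: "a > 0" and \<nu>: "Re \<nu> \<le> -2*a"
    and decay: "entries_decay (\<lambda>t. linear_factor_prod (complexify M) (\<nu> # ws) ** complexify (mexp (t *\<^sub>R M))) a"
  shows "entries_decay (\<lambda>t. linear_factor_prod (complexify M) ws ** complexify (mexp (t *\<^sub>R M))) a"
proof -
  define F where "F ws t = linear_factor_prod (complexify M) ws ** complexify (mexp (t *\<^sub>R M))" for ws t
  obtain K where K: "\<And>t i j. t \<ge> 0 \<Longrightarrow> norm (F (\<nu> # ws) t $ i $ j) \<le> K * exp (-a*t)"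
    using decay unfolding entries_decay_def F_def by blast
  \<comment> \<open>Each entry of F ws solves a scalar equation with rate \<nu>, forced by an entry of F (\<nu> # ws).\<close>
  have F': "((\<lambda>t. F ws t $ i $ j) has_vector_derivative \<nu> * F ws t $ i $ j + F (\<nu> # ws) t $ i $ j) (at t)"
    for i j t
  proof -
    have "((\<lambda>t. F ws t $ i $ j) has_vector_derivative
        (linear_factor_prod (complexify M) ws ** (complexify M ** complexify (mexp (t *\<^sub>R M)))) $ i $ j) (at t)"
      unfolding F_def
      by (rule bounded_linear.has_vector_derivative[OF bounded_linear_matrix_entry
            bounded_linear.has_vector_derivative[OF bounded_linear_matrix_mult_left
              has_vector_derivative_complexify_mexp]])
    moreover have "linear_factor_prod (complexify M) ws ** (complexify M ** complexify (mexp (t *\<^sub>R M)))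
        = mat \<nu> ** F ws t + F (\<nu> # ws) t"
      by (simp add: F_def matrix_mul_assoc linear_factor_prod_commute_self matrix_diff_rdistrib)
    ultimately show ?thesis
      by (simp add: mat_mult_left)
  qed
  define K' where "K' = norm (F ws 0) + K / a"
  have "norm (F ws t $ i $ j) \<le> K' * exp (-a*t)" if t: "t \<ge> 0" for t i j
  proof -
    have "norm (F ws t $ i $ j) \<le> (norm (F ws 0 $ i $ j) + K / a) * exp (-a*t)"
      by (rule forced_scalar_ode_bound[OF a \<nu> F' K t])
    also have "\<dots> \<le> K' * exp (-a*t)"
      using order_trans[OF Finite_Cartesian_Product.norm_nth_le Finite_Cartesian_Product.norm_nth_le]
      by (intro mult_right_mono) (simp_all add: K'_def)
    finally show ?thesis .
  qed
  then show ?thesis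
    unfolding entries_decay_def F_def by blast
qed

lemma entries_decay_mexp_if_linear_factor_prod:
  fixes M :: "real^'n^'n"
  assumes "a > 0" and "\<forall>\<nu>\<in>set \<nu>s. Re \<nu> \<le> -2*a"
    and "entries_decay (\<lambda>t. linear_factor_prod (complexify M) \<nu>s ** complexify (mexp (t *\<^sub>R M))) a"
  shows "entries_decay (\<lambda>t. complexify (mexp (t *\<^sub>R M))) a"
  using assms(2,3)
proof (induction \<nu>s)
  case (Cons \<nu> \<nu>s)
  then show ?case
    using entries_decay_linear_factor_prod_mexp_Cons[OF assms(1), of \<nu> M \<nu>s] by simp
qed simp

lemma exp_stable_if_spectral_abscissa_neg:
  fixes M :: "real^'n^'n"
  assumes "spectral_abscissa M < 0"
  shows "exp_stable M"
proof -
  obtain \<nu>s where \<nu>s: "eigenvalues M = set \<nu>s" "\<nu>s \<noteq> []" "linear_factor_prod (complexify M) \<nu>s = 0"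
    using eigenvalue_annihilator by blast
  define a where "a = Min ((\<lambda>\<nu>. - Re \<nu>) ` set \<nu>s) / 2"
  have fin: "finite ((\<lambda>\<nu>. - Re \<nu>) ` set \<nu>s)" "(\<lambda>\<nu>. - Re \<nu>) ` set \<nu>s \<noteq> {}"
    using \<nu>s(2) by auto
  have "Re \<nu> < 0" if "\<nu> \<in> set \<nu>s" for \<nu>
    using assms \<nu>s(1) that spectral_abscissa_neg_iff by blast
  then have a: "a > 0"
    unfolding a_def using fin by (simp add: Min_gr_iff)
  have "Re \<nu> \<le> -2*a" if "\<nu> \<in> set \<nu>s" for \<nu>
    using Min_le[OF fin(1) imageI[OF that]] by (simp add: a_def)
  moreover have "entries_decay (\<lambda>t. linear_factor_prod (complexify M) \<nu>s ** complexify (mexp (t *\<^sub>R M))) a"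
    unfolding entries_decay_def \<nu>s(3) by (auto intro: exI[of _ 0])
  ultimately have "entries_decay (\<lambda>t. complexify (mexp (t *\<^sub>R M))) a"
    using entries_decay_mexp_if_linear_factor_prod[OF a] by blast
  then obtain K where K: "\<And>t i j. t \<ge> 0 \<Longrightarrow> \<bar>mexp (t *\<^sub>R M) $ i $ j\<bar> \<le> K * exp (-a*t)"
    unfolding entries_decay_def by (auto simp: complexify_def)
  have "norm (mexp (t *\<^sub>R M)) \<le> (real CARD('n) * real CARD('n) * K) * exp (-a*t)" if "t \<ge> 0" for t
    using norm_matrix_le_entrywise[OF K[OF that]] by (simp add: mult_ac)
  then show ?thesis
    unfolding exp_stable_def using a by blast
qed

lemma scalar_linear_ode_solution:
  fixes y :: "real \<Rightarrow> complex"
  assumes y': "\<And>s. (y has_vector_derivative z * y s) (at s)"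
  shows "y t = exp (t *\<^sub>R z) * y 0"
proof -
  define w where "w s = exp (s *\<^sub>R (-z)) * y s" for s
  have "(w has_derivative (\<lambda>h. 0)) (at s within UNIV)" for s
  proof -
    have "(w has_vector_derivative exp (s *\<^sub>R (-z)) * (z * y s) + exp (s *\<^sub>R (-z)) * (-z) * y s) (at s)"
      unfolding w_def by (rule has_vector_derivative_mult[OF exp_scaleR_has_vector_derivative_right y'])
    then show ?thesis
      by (simp add: has_vector_derivative_def algebra_simps)
  qed
  then obtain c where "\<forall>s\<in>UNIV. w s = c"
    using has_derivative_zero_constant[OF convex_UNIV] by blast
  then have "w t = w 0" by simp
  moreover have "y t = exp (t *\<^sub>R z) * w t"
    by (simp add: w_def mult.assoc[symmetric] flip: exp_add)
  moreover have "w 0 = y 0"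
    by (simp add: w_def)
  ultimately show ?thesis
    by simp
qed

lemma complexify_mexp_eigenvector:
  assumes v: "complexify M *v v = z *s v"
  shows "complexify (mexp (t *\<^sub>R M)) *v v = exp (t *\<^sub>R z) *s v"
proof -
  have "(complexify (mexp (t *\<^sub>R M)) *v v) $ i = exp (t *\<^sub>R z) * v $ i" for i
  proof -
    have "((\<lambda>s. (complexify (mexp (s *\<^sub>R M)) *v v) $ i) has_vector_derivative
        z * (complexify (mexp (s *\<^sub>R M)) *v v) $ i) (at s)" for s
    proof -
      have "complexify M ** complexify (mexp (s *\<^sub>R M)) = complexify (mexp (s *\<^sub>R M)) ** complexify M"
        by (simp add: complexify_mult[symmetric] mexp_commute)
      then have "(complexify M ** complexify (mexp (s *\<^sub>R M))) *v v = z *s (complexify (mexp (s *\<^sub>R M)) *v v)"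
        by (simp add: matrix_vector_mul_assoc[symmetric] v matrix_vector_mult_scalar)
      moreover have "((\<lambda>s. (complexify (mexp (s *\<^sub>R M)) *v v) $ i) has_vector_derivative
          ((complexify M ** complexify (mexp (s *\<^sub>R M))) *v v) $ i) (at s)"
        by (rule bounded_linear.has_vector_derivative[OF
              bounded_linear_compose[OF bounded_linear_vec_nth bounded_linear_matrix_vector_mult_left]
              has_vector_derivative_complexify_mexp])
      ultimately show ?thesis
        by simp
    qed
    from scalar_linear_ode_solution[OF this, of t] show ?thesis
      by simp
  qed
  then show ?thesis
    by (simp add: vec_eq_iff)
qed

lemma norm_complexify_matrix_vector_entry_le:
  "norm ((complexify X *v v) $ i) \<le> norm (X::real^'n^'m) * (\<Sum>k\<in>UNIV. norm (v $ k))"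
proof -
  have "(complexify X *v v) $ i = (\<Sum>k\<in>UNIV. complex_of_real (X $ i $ k) * v $ k)"
    by (simp add: matrix_vector_mult_def complexify_def)
  then have "norm ((complexify X *v v) $ i) \<le> (\<Sum>k\<in>UNIV. norm (complex_of_real (X $ i $ k) * v $ k))"
    by (simp only: norm_sum)
  also have "\<dots> \<le> (\<Sum>k\<in>UNIV. norm X * norm (v $ k))"
  proof (rule sum_mono)
    fix k
    have "\<bar>X $ i $ k\<bar> \<le> norm X"
      by (rule order_trans[OF component_le_norm_cart Finite_Cartesian_Product.norm_nth_le])
    then show "norm (complex_of_real (X $ i $ k) * v $ k) \<le> norm X * norm (v $ k)"
      by (simp add: norm_mult mult_right_mono)
  qed
  finally show ?thesis
    by (simp add: sum_distrib_left)
qed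

lemma spectral_abscissa_neg_if_exp_stable:
  fixes M :: "real^'n^'n"
  assumes "exp_stable M"
  shows "spectral_abscissa M < 0"
  unfolding spectral_abscissa_neg_iff
proof (rule ballI, rule ccontr)
  fix z assume "z \<in> eigenvalues M" and "\<not> Re z < 0"
  obtain C a where a: "a > 0" and C: "\<And>t. t \<ge> 0 \<Longrightarrow> norm (mexp (t *\<^sub>R M)) \<le> C * exp (-a*t)"
    using assms unfolding exp_stable_def by blast
  obtain v where v: "v \<noteq> 0" "complexify M *v v = z *s v"
    using \<open>z \<in> eigenvalues M\<close> by (auto simp: eigenvalues_eq is_eigenvalue_def)
  obtain i where "v $ i \<noteq> 0"
    using v(1) by (metis vec_eq_iff zero_index)
  define V where "V = (\<Sum>k\<in>UNIV. norm (v $ k))"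
  \<comment> \<open>An eigenvector component does not decay, while the entries of the exponential do.\<close>
  have bound: "norm (v $ i) \<le> V * (C * exp (-a*t))" if t: "t \<ge> 0" for t
  proof -
    have "norm (v $ i) \<le> norm (exp (t *\<^sub>R z) * v $ i)"
      using \<open>\<not> Re z < 0\<close> t by (simp add: norm_mult mult_le_cancel_right1)
    also have "\<dots> = norm ((complexify (mexp (t *\<^sub>R M)) *v v) $ i)"
      by (simp add: complexify_mexp_eigenvector[OF v(2)])
    also have "\<dots> \<le> norm (mexp (t *\<^sub>R M)) * V"
      unfolding V_def by (rule norm_complexify_matrix_vector_entry_le)
    also have "\<dots> \<le> C * exp (-a*t) * V"
      using C[OF t] by (intro mult_right_mono) (simp_all add: V_def sum_nonneg)
    finally show ?thesis
      by (simp add: mult.commute)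
  qed
  have "((\<lambda>t. V * (C * exp (-a*t))) \<longlongrightarrow> 0) at_top"
    using a by real_asymp
  then have "eventually (\<lambda>t. V * (C * exp (-a*t)) < norm (v $ i) \<and> t \<ge> 0) at_top"
    using \<open>v $ i \<noteq> 0\<close> by (intro eventually_conj order_tendstoD(2) eventually_ge_at_top) auto
  then obtain t where "V * (C * exp (-a*t)) < norm (v $ i)" "t \<ge> 0"
    unfolding eventually_at_top_linorder by auto
  then show False
    using bound[of t] by simp
qed

subsection \<open>Lyapunov integrals\<close>

lemma exp_bounded_integrable_halfline:
  fixes g :: "real \<Rightarrow> real^'n^'m"
  assumes cont: "continuous_on {0..} g" and a: "a > 0"
    and bound: "\<And>t. t \<ge> 0 \<Longrightarrow> norm (g t) \<le> K * exp (-a*t)"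
  shows "g integrable_on {0..}" and "(\<lambda>k. integral {0..real k} g) \<longlonglongrightarrow> integral {0..} g"
proof -
  define f where "f k t = (if t \<in> {0..real k} then g t else 0)" for k :: nat and t
  have f_integrable: "f k integrable_on {0..}" for k
  proof -
    have "g integrable_on {0..real k}"
      by (rule integrable_continuous_interval) (rule continuous_on_subset[OF cont], auto)
    then show ?thesis unfolding f_def by (subst integrable_restrict_Int) (simp add: Int_absorb2)
  qed
  have dominant: "(\<lambda>t. K * exp (-a*t)) integrable_on {0..}"
    using integrable_cmul[OF integrable_on_exp_minus_to_infinity[OF a, of 0], of K] by simp
  have dominated: "norm (f k t) \<le> K * exp (-a*t)" if "t \<in> {0..}" for k t
    using bound[of t] that order_trans[OF norm_ge_zero bound[of t]] by (auto simp: f_def)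
  have "(\<lambda>k. f k t) \<longlonglongrightarrow> g t" if "t \<in> {0..}" for t
  proof (rule tendsto_eventually)
    obtain N :: nat where "t \<le> real N" using real_arch_simple by blast
    then show "\<forall>\<^sub>F k in sequentially. f k t = g t"
      using that by (auto simp: f_def eventually_sequentially intro!: exI[of _ N])
  qed
  note convergence = dominated_convergence[OF f_integrable dominant dominated this]
  show "g integrable_on {0..}"
    by (rule convergence(1))
  have "integral {0..} (f k) = integral {0..real k} g" for k
    unfolding f_def by (subst integral_restrict_Int) (simp add: Int_absorb2)
  then show "(\<lambda>k. integral {0..real k} g) \<longlonglongrightarrow> integral {0..} g"
    using convergence(2) by simp
qed

definition lyap_integral :: "real^'n^'n \<Rightarrow> real^'n^'n \<Rightarrow> real^'n^'n" where
  "lyap_integral M X = integral {0..} (\<lambda>t. transpose (mexp (t *\<^sub>R M)) ** X ** mexp (t *\<^sub>R M))"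

lemma lqr_cost_eq_trace_lyap_integral:
  "lqr_cost A B Q R U = trace (lyap_integral (A + B ** U) (Q + transpose U ** R ** U))"
  by (simp add: lqr_cost_def lyap_integral_def)

lemma norm_lyap_integrand_le:
  assumes "norm (mexp (t *\<^sub>R M)) \<le> C * exp (-a*t)"
  shows "norm (transpose (mexp (t *\<^sub>R M)) ** X ** mexp (t *\<^sub>R M)) \<le> (C^2 * norm X) * exp (-(2*a)*t)"
proof -
  have "norm (transpose (mexp (t *\<^sub>R M)) ** X ** mexp (t *\<^sub>R M))
      \<le> norm (mexp (t *\<^sub>R M)) * norm X * norm (mexp (t *\<^sub>R M))"
    by (rule norm_transpose_mult_mult_le)
  also have "\<dots> \<le> (C * exp (-a*t)) * norm X * (C * exp (-a*t))"
    using assms order_trans[OF norm_ge_zero assms] by (intro mult_mono) auto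
  also have "\<dots> = (C^2 * norm X) * exp (-(2*a)*t)"
    by (simp add: power2_eq_square algebra_simps flip: exp_add)
  finally show ?thesis .
qed

lemma has_vector_derivative_lyap_integrand:
  "((\<lambda>t. transpose (mexp (t *\<^sub>R M)) ** X ** mexp (t *\<^sub>R M)) has_vector_derivative
     (transpose M ** (transpose (mexp (t *\<^sub>R M)) ** X ** mexp (t *\<^sub>R M)) +
      (transpose (mexp (t *\<^sub>R M)) ** X ** mexp (t *\<^sub>R M)) ** M)) (at t within S)"
proof -
  have "((\<lambda>t. mexp (t *\<^sub>R transpose M) ** X) has_vector_derivative (transpose M ** mexp (t *\<^sub>R transpose M)) ** X) (at t within S)"
    by (rule bounded_linear.has_vector_derivative[OF bounded_linear_matrix_mult_right has_vector_derivative_mexp])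
  then have "((\<lambda>t. (mexp (t *\<^sub>R transpose M) ** X) ** mexp (t *\<^sub>R M)) has_vector_derivative
     (mexp (t *\<^sub>R transpose M) ** X) ** (M ** mexp (t *\<^sub>R M)) + ((transpose M ** mexp (t *\<^sub>R transpose M)) ** X) ** mexp (t *\<^sub>R M)) (at t within S)"
    by (rule bounded_bilinear.has_vector_derivative[OF bounded_bilinear_matrix_mult _ has_vector_derivative_mexp])
  then show ?thesis
    by (simp add: transpose_mexp mexp_commute matrix_mul_assoc add.commute)
qed

lemma exp_stable_lyap_integrand_bound:
  assumes "exp_stable M"
  obtains K a where "a > 0"
    and "\<And>t. t \<ge> 0 \<Longrightarrow> norm (transpose (mexp (t *\<^sub>R M)) ** X ** mexp (t *\<^sub>R M)) \<le> K * exp (-a*t)"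
proof -
  obtain C a where a: "a > 0" and C: "\<forall>t\<ge>0. norm (mexp (t *\<^sub>R M)) \<le> C * exp (-a*t)"
    using assms unfolding exp_stable_def by blast
  show ?thesis
  proof (rule that)
    show "2*a > 0" using a by simp
    show "norm (transpose (mexp (t *\<^sub>R M)) ** X ** mexp (t *\<^sub>R M)) \<le> (C^2 * norm X) * exp (-(2*a)*t)"
      if "t \<ge> 0" for t
      using C that by (intro norm_lyap_integrand_le) auto
  qed
qed

lemma continuous_on_lyap_integrand:
  "continuous_on S (\<lambda>t. transpose (mexp (t *\<^sub>R M)) ** X ** mexp (t *\<^sub>R M))"
  using has_vector_derivative_continuous[OF has_vector_derivative_lyap_integrand[of M X _ UNIV]]
  by (auto intro: continuous_at_imp_continuous_on)

lemma integrable_lyap_integrand: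
  assumes "exp_stable M"
  shows "(\<lambda>t. transpose (mexp (t *\<^sub>R M)) ** X ** mexp (t *\<^sub>R M)) integrable_on {0..}"
proof -
  obtain K a where "a > 0"
    and "\<And>t. t \<ge> 0 \<Longrightarrow> norm (transpose (mexp (t *\<^sub>R M)) ** X ** mexp (t *\<^sub>R M)) \<le> K * exp (-a*t)"
    using exp_stable_lyap_integrand_bound[OF assms, where X = X] by blast
  then show ?thesis
    by (rule exp_bounded_integrable_halfline(1)[OF continuous_on_lyap_integrand])
qed

lemma integral_halfline_derivative:
  fixes g h :: "real \<Rightarrow> real^'n^'m"
  assumes g': "\<And>t. (g has_vector_derivative h t) (at t)" and h_cont: "continuous_on {0..} h"
    and a: "a > 0" and h_bound: "\<And>t. t \<ge> 0 \<Longrightarrow> norm (h t) \<le> K * exp (-a*t)"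
    and g_lim: "(g \<longlongrightarrow> 0) at_top"
  shows "integral {0..} h = - g 0"
proof -
  have "integral {0..real k} h = g (real k) - g 0" for k
    by (intro integral_unique fundamental_theorem_of_calculus) (auto intro: has_vector_derivative_at_within[OF g'])
  moreover have "(\<lambda>k. g (real k)) \<longlonglongrightarrow> 0"
    by (rule filterlim_compose[OF g_lim filterlim_real_sequentially])
  ultimately have "(\<lambda>k. integral {0..real k} h) \<longlonglongrightarrow> 0 - g 0"
    using tendsto_diff[of "\<lambda>k. g (real k)" 0 sequentially "\<lambda>_. g 0" "g 0"] by simp
  then show ?thesis
    using exp_bounded_integrable_halfline(2)[OF h_cont a h_bound] LIMSEQ_unique by fastforce
qed

lemma lyapunov_equation:
  assumes "exp_stable M"
  shows "transpose M ** lyap_integral M X + lyap_integral M X ** M = - X"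
proof -
  define g where "g t = transpose (mexp (t *\<^sub>R M)) ** X ** mexp (t *\<^sub>R M)" for t
  define h where "h t = transpose M ** g t + g t ** M" for t
  obtain K a where a: "a > 0" and g_bound: "\<And>t. t \<ge> 0 \<Longrightarrow> norm (g t) \<le> K * exp (-a*t)"
    using exp_stable_lyap_integrand_bound[OF assms] unfolding g_def by blast
  have g_integrable: "g integrable_on {0..}"
    unfolding g_def by (rule integrable_lyap_integrand[OF assms])
  have "integral {0..} h = - g 0"
  proof (rule integral_halfline_derivative[OF _ _ a])
    show "(g has_vector_derivative h t) (at t)" for t
      unfolding g_def h_def by (rule has_vector_derivative_lyap_integrand)
    show "continuous_on {0..} h"
      unfolding h_def g_def
      by (intro continuous_intros continuous_on_lyap_integrand
          bounded_linear.continuous_on[OF bounded_linear_matrix_mult_left]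
          bounded_linear.continuous_on[OF bounded_linear_matrix_mult_right])
    show "norm (h t) \<le> (2 * norm M * K) * exp (-a*t)" if "t \<ge> 0" for t
    proof -
      have "norm (h t) \<le> norm M * norm (g t) + norm (g t) * norm M"
        unfolding h_def using norm_matrix_mult_le[of "transpose M" "g t"] norm_matrix_mult_le[of "g t" M]
        by (intro order_trans[OF norm_triangle_ineq add_mono]) (simp_all add: norm_transpose)
      also have "\<dots> \<le> (2 * norm M) * (K * exp (-a*t))"
        using g_bound[OF that] by (simp add: mult_left_mono)
      finally show ?thesis by simp
    qed
    have "((\<lambda>t. K * exp (-a*t)) \<longlongrightarrow> 0) at_top"
      using a by real_asymp
    then show "(g \<longlongrightarrow> 0) at_top"
      by (rule Lim_null_comparison[rotated]) (use g_bound in \<open>auto intro: eventually_at_top_linorderI\<close>)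
  qed
  moreover have "integral {0..} h = transpose M ** integral {0..} g + integral {0..} g ** M"
    unfolding h_def
    using integral_linear[OF g_integrable bounded_linear_matrix_mult_left, of "transpose M"]
      integral_linear[OF g_integrable bounded_linear_matrix_mult_right, of M]
      integrable_linear[OF g_integrable bounded_linear_matrix_mult_left, of "transpose M"]
      integrable_linear[OF g_integrable bounded_linear_matrix_mult_right, of M]
    by (simp add: o_def integral_add)
  ultimately show ?thesis
    by (simp add: lyap_integral_def g_def[abs_def])
qed

lemma norm_lyap_integral_le:
  assumes a: "a > 0" and C: "\<forall>t\<ge>0. norm (mexp (t *\<^sub>R M)) \<le> C * exp (-a*t)"
  shows "norm (lyap_integral M X) \<le> C^2 * norm X / (2*a)"
proof -
  have stable: "exp_stable M" unfolding exp_stable_def using a C by blast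
  have dominant: "((\<lambda>t. C^2 * norm X * exp (-(2*a)*t)) has_integral C^2 * norm X / (2*a)) {0..}"
    using has_integral_mult_right[OF has_integral_exp_minus_to_infinity[of "2*a" 0], of "C^2 * norm X"] a
    by simp
  have "norm (lyap_integral M X) \<le> integral {0..} (\<lambda>t. C^2 * norm X * exp (-(2*a)*t))"
    unfolding lyap_integral_def
  proof (rule integral_norm_bound_integral[OF integrable_lyap_integrand[OF stable] has_integral_integrable[OF dominant]])
    fix t :: real assume "t \<in> {0..}"
    then show "norm (transpose (mexp (t *\<^sub>R M)) ** X ** mexp (t *\<^sub>R M)) \<le> C^2 * norm X * exp (-(2*a)*t)"
      using C by (intro norm_lyap_integrand_le) auto
  qed
  then show ?thesis
    using integral_unique[OF dominant] by simp
qed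

definition gramian :: "real^'n^'n \<Rightarrow> real^'n^'n" where
  "gramian M = lyap_integral (transpose M) (mat 1)"

lemma gramian_lyapunov_equation: "exp_stable M \<Longrightarrow> M ** gramian M + gramian M ** transpose M = - mat 1"
  using lyapunov_equation[OF exp_stable_transpose, of M "mat 1"] by (simp add: gramian_def)

lemma norm_gramian_le:
  fixes M :: "real^'n^'n"
  assumes "a > 0" and "\<And>t. t \<ge> 0 \<Longrightarrow> norm (mexp (t *\<^sub>R M)) \<le> C * exp (-a*t)"
  shows "norm (gramian M) \<le> C^2 * norm (mat 1 :: real^'n^'n) / (2*a)"
proof -
  have "\<forall>t\<ge>0. norm (mexp (t *\<^sub>R transpose M)) \<le> C * exp (-a*t)"
    using assms(2) by (simp add: transpose_mexp[symmetric] norm_transpose)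
  then show ?thesis
    unfolding gramian_def by (rule norm_lyap_integral_le[OF assms(1)])
qed

lemma trace_eq_gramian_dual:
  assumes "exp_stable M"
  shows "trace Y = - trace ((Y ** M + transpose M ** Y) ** gramian M)"
proof -
  have "trace Y = - trace (Y ** (M ** gramian M + gramian M ** transpose M))"
    by (simp add: gramian_lyapunov_equation[OF assms] matrix_mult_uminus_right trace_uminus)
  also have "\<dots> = - (trace ((Y ** M) ** gramian M) + trace ((Y ** gramian M) ** transpose M))"
    by (simp add: matrix_add_ldistrib trace_add matrix_mul_assoc)
  also have "trace ((Y ** gramian M) ** transpose M) = trace ((transpose M ** Y) ** gramian M)"
    by (simp add: trace_mul_sym[of "Y ** gramian M"] matrix_mul_assoc)
  finally show ?thesis
    by (simp add: matrix_add_rdistrib trace_add)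
qed

lemma trace_lyap_integral:
  assumes "exp_stable M"
  shows "trace (lyap_integral M X) = trace (X ** gramian M)"
  using trace_eq_gramian_dual[OF assms, of "lyap_integral M X"] lyapunov_equation[OF assms, of X]
  by (simp add: add.commute matrix_mult_uminus_left trace_uminus)

lemma trace_gramian_perturb:
  assumes "exp_stable M" and "exp_stable (M + E)"
  shows "trace (Z ** gramian (M + E)) - trace (Z ** gramian M) =
         trace ((lyap_integral M Z ** E + transpose E ** lyap_integral M Z) ** gramian (M + E))"
proof -
  let ?W = "lyap_integral M Z"
  have "?W ** (M + E) + transpose (M + E) ** ?W = (transpose M ** ?W + ?W ** M) + (?W ** E + transpose E ** ?W)"
    by (simp add: transpose_add matrix_add_ldistrib matrix_add_rdistrib algebra_simps)
  also have "transpose M ** ?W + ?W ** M = - Z"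
    by (rule lyapunov_equation[OF assms(1)])
  finally have "?W ** (M + E) + transpose (M + E) ** ?W = - Z + (?W ** E + transpose E ** ?W)" .
  then have "trace ?W = - trace ((- Z + (?W ** E + transpose E ** ?W)) ** gramian (M + E))"
    using trace_eq_gramian_dual[OF assms(2), of ?W] by simp
  also have "\<dots> = trace (Z ** gramian (M + E)) - trace ((?W ** E + transpose E ** ?W) ** gramian (M + E))"
    by (simp only: matrix_add_rdistrib matrix_mult_uminus_left trace_add trace_uminus)
  finally show ?thesis
    using trace_lyap_integral[OF assms(1), of Z] by simp
qed

subsection \<open>Robustness of exponential stability\<close>

lemma differential_inequality_exp_bound:
  fixes f f' :: "real \<Rightarrow> real"
  assumes f': "\<And>t. t \<ge> 0 \<Longrightarrow> (f has_real_derivative f' t) (at t)"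
    and le: "\<And>t. t \<ge> 0 \<Longrightarrow> f' t \<le> c * f t"
    and t: "t \<ge> 0"
  shows "f t \<le> f 0 * exp (c * t)"
proof -
  define h where "h s = f s * exp (- c * s)" for s
  have "h t \<le> h 0"
  proof (rule DERIV_nonpos_imp_nonincreasing[OF t])
    fix s assume s: "0 \<le> s" "s \<le> t"
    have "(h has_real_derivative f' s * exp (- c * s) + f s * (exp (- c * s) * (- c))) (at s)"
      unfolding h_def using f'[OF s(1)] by (auto intro!: derivative_eq_intros)
    moreover have "f' s * exp (- c * s) \<le> c * f s * exp (- c * s)"
      by (intro mult_right_mono le s) auto
    ultimately show "\<exists>y. (h has_real_derivative y) (at s) \<and> y \<le> 0"
      by (intro exI[of _ "f' s * exp (- c * s) + f s * (exp (- c * s) * (- c))"]) (simp add: algebra_simps)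
  qed
  then have "f t * exp (- c * t) * exp (c * t) \<le> f 0 * exp (c * t)"
    by (intro mult_right_mono) (auto simp: h_def)
  then show ?thesis
    by (simp add: mult.assoc flip: exp_add)
qed

lemma has_vector_derivative_mexp_vector:
  "((\<lambda>t. mexp (t *\<^sub>R M) *v x) has_vector_derivative M *v (mexp (t *\<^sub>R M) *v x)) (at t within S)"
  using bounded_linear.has_vector_derivative[OF bounded_linear_matrix_vector_mult_left has_vector_derivative_mexp[of M t S], of x]
  by (simp add: matrix_vector_mul_assoc)

lemma has_real_derivative_quadratic_form_mexp:
  fixes M P :: "real^'n^'n"
  shows "((\<lambda>t. (mexp (t *\<^sub>R M) *v x) \<bullet> (P *v (mexp (t *\<^sub>R M) *v x))) has_real_derivative
     (mexp (t *\<^sub>R M) *v x) \<bullet> ((transpose M ** P + P ** M) *v (mexp (t *\<^sub>R M) *v x))) (at t)"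
proof -
  let ?x = "mexp (t *\<^sub>R M) *v x"
  have "((\<lambda>t. (mexp (t *\<^sub>R M) *v x) \<bullet> (P *v (mexp (t *\<^sub>R M) *v x))) has_vector_derivative
      (?x \<bullet> (P *v (M *v ?x)) + (M *v ?x) \<bullet> (P *v ?x))) (at t)"
    by (rule bounded_bilinear.has_vector_derivative[OF bounded_bilinear_inner has_vector_derivative_mexp_vector
          bounded_linear.has_vector_derivative[OF matrix_vector_mul_bounded_linear has_vector_derivative_mexp_vector]])
  moreover have "(M *v ?x) \<bullet> (P *v ?x) = ?x \<bullet> ((transpose M ** P) *v ?x)"
    by (simp add: matrix_vector_mul_assoc[symmetric] inner_commute[of ?x] dot_lmul_matrix)
       (rule inner_commute)
  ultimately show ?thesis
    by (simp add: has_real_derivative_iff_has_vector_derivative matrix_vector_mul_assoc matrix_mul_assoc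
        matrix_add_rdistrib matrix_vector_mult_add_rdistrib inner_add_right add.commute)
qed

lemma norm_mexp_vector_lower:
  fixes M :: "real^'n^'n"
  assumes t: "t \<ge> 0"
  shows "norm y ^ 2 * exp (- (2 * norm M) * t) \<le> norm (mexp (t *\<^sub>R M) *v y) ^ 2"
proof -
  define g where "g s = - ((mexp (s *\<^sub>R M) *v y) \<bullet> (mat 1 *v (mexp (s *\<^sub>R M) *v y)))" for s
  define g' where "g' s = - ((mexp (s *\<^sub>R M) *v y) \<bullet> ((transpose M ** mat 1 + mat 1 ** M) *v (mexp (s *\<^sub>R M) *v y)))" for s
  have "(g has_real_derivative g' s) (at s)" for s
    unfolding g_def g'_def by (intro DERIV_minus has_real_derivative_quadratic_form_mexp)
  moreover have "g' s \<le> (- (2 * norm M)) * g s" for s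
  proof -
    let ?x = "mexp (s *\<^sub>R M) *v y"
    have "?x \<bullet> ((transpose M ** mat 1 + mat 1 ** M) *v ?x) = 2 * (?x \<bullet> (M *v ?x))"
      by (simp add: matrix_vector_mult_add_rdistrib inner_add_right inner_commute[of ?x] dot_lmul_matrix)
    then show ?thesis
      using abs_inner_matrix_vector_le[of ?x M] by (simp add: g_def g'_def power2_norm_eq_inner)
  qed
  ultimately have "g t \<le> g 0 * exp ((- (2 * norm M)) * t)"
    using differential_inequality_exp_bound t by blast
  then show ?thesis
    by (simp add: g_def power2_norm_eq_inner)
qed

lemma inner_transpose_mult_self: "y \<bullet> ((transpose A ** A) *v y) = norm ((A::real^'n^'n) *v y) ^ 2"
  by (simp add: matrix_vector_mul_assoc[symmetric] inner_commute[of y] dot_lmul_matrix power2_norm_eq_inner)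

lemma lyap_integral_identity_lower:
  fixes M :: "real^'n^'n"
  assumes stable: "exp_stable M"
  shows "norm y ^ 2 / (2 * norm M + 1) \<le> y \<bullet> (lyap_integral M (mat 1) *v y)"
proof -
  define c where "c = 2 * norm M + 1"
  have c: "c > 0" by (simp add: c_def add_nonneg_pos)
  have quadratic: "bounded_linear (\<lambda>X::real^'n^'n. y \<bullet> (X *v y))"
    by (rule bounded_linear_compose[OF bounded_linear_inner_right bounded_linear_matrix_vector_mult_left])
  have integral_eq: "y \<bullet> (lyap_integral M (mat 1) *v y) = integral {0..} (\<lambda>t. norm (mexp (t *\<^sub>R M) *v y) ^ 2)"
    unfolding lyap_integral_def
    using integral_linear[OF integrable_lyap_integrand[OF stable, where X = "mat 1"] quadratic]
    by (simp add: o_def inner_transpose_mult_self)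
  have integrable: "(\<lambda>t. norm (mexp (t *\<^sub>R M) *v y) ^ 2) integrable_on {0..}"
    using integrable_linear[OF integrable_lyap_integrand[OF stable, where X = "mat 1"] quadratic]
    by (simp add: o_def inner_transpose_mult_self)
  have lower: "((\<lambda>t. norm y ^ 2 * exp (-c*t)) has_integral norm y ^ 2 / c) {0..}"
    using has_integral_mult_right[OF has_integral_exp_minus_to_infinity[OF c, of 0], of "norm y ^ 2"]
    by simp
  have "norm y ^ 2 / c \<le> integral {0..} (\<lambda>t. norm (mexp (t *\<^sub>R M) *v y) ^ 2)"
  proof (rule has_integral_le[OF lower integrable_integral[OF integrable]])
    fix t :: real assume "t \<in> {0..}"
    then have "norm y ^ 2 * exp (-c*t) \<le> norm y ^ 2 * exp (- (2 * norm M) * t)"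
      by (intro mult_left_mono) (auto simp: c_def algebra_simps)
    also have "\<dots> \<le> norm (mexp (t *\<^sub>R M) *v y) ^ 2"
      using \<open>t \<in> {0..}\<close> by (intro norm_mexp_vector_lower) simp
    finally show "norm y ^ 2 * exp (-c*t) \<le> norm (mexp (t *\<^sub>R M) *v y) ^ 2" .
  qed
  then show ?thesis
    using integral_eq by (simp add: c_def)
qed

lemma lyapunov_certificate_trajectory_bound:
  fixes M P Z :: "real^'n^'n"
  assumes c: "c > 0" and p: "p > 0"
    and lower: "\<And>y. norm y ^ 2 \<le> c * (y \<bullet> (P *v y))"
    and upper: "\<And>y. y \<bullet> (P *v y) \<le> p * norm y ^ 2"
    and lyap: "transpose M ** P + P ** M = Z - mat 1" and Z: "norm Z \<le> 1/2"
    and t: "t \<ge> 0"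
  shows "norm (mexp (t *\<^sub>R M) *v x) ^ 2 \<le> c * p * norm x ^ 2 * exp (- t / (2*p))"
proof -
  define V where "V s = (mexp (s *\<^sub>R M) *v x) \<bullet> (P *v (mexp (s *\<^sub>R M) *v x))" for s
  define V' where "V' s = (mexp (s *\<^sub>R M) *v x) \<bullet> ((transpose M ** P + P ** M) *v (mexp (s *\<^sub>R M) *v x))" for s
  have "(V has_real_derivative V' s) (at s)" for s
    unfolding V_def V'_def by (rule has_real_derivative_quadratic_form_mexp)
  moreover have "V' s \<le> (- (1 / (2*p))) * V s" for s
  proof -
    let ?x = "mexp (s *\<^sub>R M) *v x"
    have "V' s = ?x \<bullet> (Z *v ?x) - norm ?x ^ 2"
      by (simp add: V'_def lyap matrix_vector_mult_diff_rdistrib inner_diff_right power2_norm_eq_inner)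
    also have "\<dots> \<le> - (norm ?x ^ 2 / 2)"
      using abs_inner_matrix_vector_le[of ?x Z] mult_right_mono[OF Z, of "norm ?x ^ 2"] by simp
    also have "\<dots> \<le> - (V s / (2*p))"
      using upper[of ?x] p by (simp add: V_def field_simps)
    finally show ?thesis by simp
  qed
  ultimately have "V t \<le> V 0 * exp (- t / (2*p))"
    using differential_inequality_exp_bound[of V V' "- (1 / (2*p))" t] t by simp
  also have "\<dots> \<le> p * norm x ^ 2 * exp (- t / (2*p))"
    using upper[of x] by (intro mult_right_mono) (simp_all add: V_def)
  finally have "c * V t \<le> c * (p * norm x ^ 2 * exp (- t / (2*p)))"
    using c by simp
  moreover have "norm (mexp (t *\<^sub>R M) *v x) ^ 2 \<le> c * V t"
    unfolding V_def by (rule lower)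
  ultimately show ?thesis
    by (simp add: mult.assoc)
qed

lemma exp_bound_from_lyapunov_certificate:
  fixes M P Z :: "real^'n^'n"
  assumes c: "c > 0" and p: "p > 0"
    and lower: "\<And>y. norm y ^ 2 \<le> c * (y \<bullet> (P *v y))"
    and upper: "\<And>y. y \<bullet> (P *v y) \<le> p * norm y ^ 2"
    and lyap: "transpose M ** P + P ** M = Z - mat 1" and Z: "norm Z \<le> 1/2"
    and t: "t \<ge> 0"
  shows "norm (mexp (t *\<^sub>R M)) \<le> sqrt (real CARD('n) * c * p) * exp (- t / (4*p))"
proof -
  note trajectory = lyapunov_certificate_trajectory_bound[OF c p lower upper lyap Z t]
  have "norm (mexp (t *\<^sub>R M)) ^ 2 = (\<Sum>j\<in>UNIV. norm (mexp (t *\<^sub>R M) *v axis j 1) ^ 2)"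
    by (rule norm_matrix_sq_columns)
  also have "\<dots> \<le> (\<Sum>j\<in>(UNIV::'n set). c * p * exp (- t / (2*p)))"
  proof (rule sum_mono)
    fix j :: 'n
    show "norm (mexp (t *\<^sub>R M) *v axis j 1) ^ 2 \<le> c * p * exp (- t / (2*p))"
      using trajectory[of "axis j 1"] by simp
  qed
  also have "\<dots> = (sqrt (real CARD('n) * c * p) * exp (- t / (4*p))) ^ 2"
  proof -
    have "- t / (4*p) + - t / (4*p) = - t / (2*p)"
      by (simp add: field_simps)
    then have "exp (- t / (4*p)) ^ 2 = exp (- t / (2*p))"
      by (simp add: power2_eq_square flip: exp_add)
    then show ?thesis
      using c p by (simp add: power_mult_distrib)
  qed
  finally show ?thesis
    by (rule power2_le_imp_le) (use c p in simp)
qed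

lemma exp_stable_uniform_neighbourhood:
  fixes M :: "real^'n^'n"
  assumes "exp_stable M"
  obtains \<delta> a C where "\<delta> > 0" "a > 0"
    "\<And>E t. norm E \<le> \<delta> \<Longrightarrow> t \<ge> 0 \<Longrightarrow> norm (mexp (t *\<^sub>R (M + E))) \<le> C * exp (-a*t)"
proof -
  \<comment> \<open>The Lyapunov function of M remains one for all small perturbations M + E.\<close>
  define P where "P = lyap_integral M (mat 1)"
  define c where "c = 2 * norm M + 1"
  define p where "p = norm P + 1"
  have c: "c > 0" and p: "p > 0"
    by (simp_all add: c_def p_def add_nonneg_pos)
  have lower: "norm y ^ 2 \<le> c * (y \<bullet> (P *v y))" for y
    using lyap_integral_identity_lower[OF assms, of y] c by (simp add: P_def c_def field_simps)
  have upper: "y \<bullet> (P *v y) \<le> p * norm y ^ 2" for y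
  proof -
    have "y \<bullet> (P *v y) \<le> norm P * norm y ^ 2"
      using abs_inner_matrix_vector_le[of y P] by simp
    also have "\<dots> \<le> p * norm y ^ 2"
      by (intro mult_right_mono) (simp_all add: p_def)
    finally show ?thesis .
  qed
  have bound: "norm (mexp (t *\<^sub>R (M + E))) \<le> sqrt (real CARD('n) * c * p) * exp (- (1 / (4*p)) * t)"
    if E: "norm E \<le> 1 / (4*p)" and t: "t \<ge> 0" for E t
  proof -
    define Z where "Z = P ** E + transpose E ** P"
    have "transpose (M + E) ** P + P ** (M + E) = Z - mat 1"
      using lyapunov_equation[OF assms, of "mat 1"]
      by (simp add: Z_def P_def transpose_add matrix_add_rdistrib matrix_add_ldistrib algebra_simps)
    moreover have "norm Z \<le> 1/2"
    proof -
      have "norm Z \<le> 2 * norm P * norm E"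
        unfolding Z_def by (rule norm_mult_add_transpose_mult_le)
      also have "\<dots> \<le> 2 * p * (1 / (4*p))"
        using E by (intro mult_mono) (auto simp: p_def)
      finally show ?thesis using p by simp
    qed
    ultimately show ?thesis
      using exp_bound_from_lyapunov_certificate[OF c p lower upper _ _ t] by simp
  qed
  show ?thesis
    using that[of "1 / (4*p)" "1 / (4*p)" "sqrt (real CARD('n) * c * p)"] p bound by simp
qed

subsection \<open>Expansion of the LQR cost\<close>

definition lqr_cost_variation ::
  "real^'d^'d \<Rightarrow> real^'p^'d \<Rightarrow> real^'d^'d \<Rightarrow> real^'p^'p \<Rightarrow> real^'d^'p \<Rightarrow> real^'d^'p \<Rightarrow> real^'d^'d" where
  "lqr_cost_variation A B Q R U D = transpose D ** R ** U + transpose U ** R ** D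
     + lyap_integral (A + B ** U) (Q + transpose U ** R ** U) ** (B ** D)
     + transpose (B ** D) ** lyap_integral (A + B ** U) (Q + transpose U ** R ** U)"

lemma lqr_cost_eq_trace_gramian:
  "exp_stable (A + B ** U) \<Longrightarrow> lqr_cost A B Q R U = trace ((Q + transpose U ** R ** U) ** gramian (A + B ** U))"
  unfolding lqr_cost_eq_trace_lyap_integral by (rule trace_lyap_integral)

lemma lqr_cost_diff:
  assumes stable: "exp_stable (A + B ** U)" and stable': "exp_stable (A + B ** (U + D))"
  shows "lqr_cost A B Q R (U + D) - lqr_cost A B Q R U =
         trace ((transpose D ** R ** D + lqr_cost_variation A B Q R U D) ** gramian (A + B ** (U + D)))"
proof -
  define M where "M = A + B ** U"
  define X where "X = Q + transpose U ** R ** U"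
  define P where "P = lyap_integral M X"
  define G where "G = gramian (A + B ** (U + D))"
  have M_plus: "A + B ** (U + D) = M + B ** D"
    by (simp add: M_def matrix_add_ldistrib add.assoc)
  have "trace (X ** G) - trace (X ** gramian M) = trace ((P ** (B ** D) + transpose (B ** D) ** P) ** G)"
    unfolding G_def M_plus P_def
    by (rule trace_gramian_perturb) (use stable stable' M_plus in \<open>simp_all add: M_def\<close>)
  moreover have "Q + transpose (U + D) ** R ** (U + D)
      = X + (transpose D ** R ** D + transpose D ** R ** U + transpose U ** R ** D)"
    by (simp add: X_def transpose_add matrix_add_ldistrib matrix_add_rdistrib algebra_simps)
  ultimately show ?thesis
    using lqr_cost_eq_trace_gramian[OF stable, of Q R] lqr_cost_eq_trace_gramian[OF stable', of Q R]
    by (simp add: lqr_cost_variation_def M_def X_def P_def G_def matrix_add_rdistrib trace_add algebra_simps)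
qed

lemma lqr_cost_diff_first_order:
  fixes Q :: "real^'d^'d" and R :: "real^'p^'p" and D :: "real^'d^'p"
  assumes stable: "exp_stable (A + B ** U)" and stable': "exp_stable (A + B ** (U + D))"
  defines "W \<equiv> lyap_integral (A + B ** U) (lqr_cost_variation A B Q R U D)"
    and "G \<equiv> gramian (A + B ** (U + D))"
  shows "lqr_cost A B Q R (U + D) - lqr_cost A B Q R U
           - trace (lqr_cost_variation A B Q R U D ** gramian (A + B ** U))
         = trace ((transpose D ** R ** D) ** G) + trace ((W ** (B ** D) + transpose (B ** D) ** W) ** G)"
proof -
  have M_plus: "A + B ** (U + D) = (A + B ** U) + B ** D"
    by (simp add: matrix_add_ldistrib add.assoc)
  have "trace (lqr_cost_variation A B Q R U D ** G) - trace (lqr_cost_variation A B Q R U D ** gramian (A + B ** U))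
      = trace ((W ** (B ** D) + transpose (B ** D) ** W) ** G)"
    unfolding G_def W_def M_plus
    by (rule trace_gramian_perturb[OF stable]) (use stable' M_plus in simp)
  then show ?thesis
    using lqr_cost_diff[OF stable stable', of Q R] by (simp add: G_def matrix_add_rdistrib trace_add)
qed

lemma linear_trace_lqr_cost_variation:
  "linear (\<lambda>D. trace (lqr_cost_variation A B Q R U D ** G))"
  by (rule linearI)
     (simp_all add: lqr_cost_variation_def transpose_add transpose_scalar matrix_add_ldistrib
       matrix_add_rdistrib matrix_scalar_ac scalar_matrix_assoc[symmetric] trace_add trace_scaleR
       algebra_simps)

lemma norm_lqr_cost_variation_le:
  "norm (lqr_cost_variation A B Q R U D)
     \<le> (2 * norm R * norm U + 2 * norm (lyap_integral (A + B ** U) (Q + transpose U ** R ** U)) * norm B) * norm D"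
proof -
  let ?P = "lyap_integral (A + B ** U) (Q + transpose U ** R ** U)"
  have "norm (lqr_cost_variation A B Q R U D) \<le> norm (transpose D ** R ** U) + norm (transpose U ** R ** D)
      + norm (?P ** (B ** D)) + norm (transpose (B ** D) ** ?P)"
    unfolding lqr_cost_variation_def by (intro order.trans[OF norm_triangle_ineq] add_mono order.refl)
  also have "\<dots> \<le> norm D * norm R * norm U + norm U * norm R * norm D
      + norm ?P * (norm B * norm D) + (norm B * norm D) * norm ?P"
  proof (intro add_mono)
    have BD: "norm (B ** D) \<le> norm B * norm D"
      by (rule norm_matrix_mult_le)
    show "norm (?P ** (B ** D)) \<le> norm ?P * (norm B * norm D)"
      using norm_matrix_mult_le[of ?P "B ** D"] mult_left_mono[OF BD norm_ge_zero[of ?P]] by linarith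
    show "norm (transpose (B ** D) ** ?P) \<le> (norm B * norm D) * norm ?P"
      using norm_matrix_mult_le[of "transpose (B ** D)" ?P] mult_right_mono[OF BD norm_ge_zero[of ?P]]
      by (simp add: norm_transpose)
  qed (rule norm_transpose_mult_mult_le)+
  finally show ?thesis
    by (simp add: algebra_simps)
qed

lemma abs_lqr_cost_remainder_le:
  fixes Q :: "real^'d^'d" and R :: "real^'p^'p" and D :: "real^'d^'p"
  assumes stable: "exp_stable (A + B ** U)" and stable': "exp_stable (A + B ** (U + D))"
  defines "W \<equiv> lyap_integral (A + B ** U) (lqr_cost_variation A B Q R U D)"
    and "G \<equiv> gramian (A + B ** (U + D))"
  shows "\<bar>lqr_cost A B Q R (U + D) - lqr_cost A B Q R U
           - trace (lqr_cost_variation A B Q R U D ** gramian (A + B ** U))\<bar>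
         \<le> real CARD('d) * norm G * (norm R * norm D ^ 2 + 2 * norm W * (norm B * norm D))"
proof -
  have "\<bar>trace ((transpose D ** R ** D) ** G)\<bar> \<le> real CARD('d) * (norm (transpose D ** R ** D) * norm G)"
    by (rule abs_trace_mult_le)
  also have "\<dots> \<le> real CARD('d) * (norm D * norm R * norm D * norm G)"
    by (intro mult_left_mono mult_right_mono norm_transpose_mult_mult_le) auto
  finally have quadratic: "\<bar>trace ((transpose D ** R ** D) ** G)\<bar>
      \<le> real CARD('d) * norm G * (norm R * norm D ^ 2)"
    by (simp add: power2_eq_square mult_ac)
  have "norm (W ** (B ** D) + transpose (B ** D) ** W) \<le> 2 * norm W * norm (B ** D)"
    by (rule norm_mult_add_transpose_mult_le)
  also have "\<dots> \<le> 2 * norm W * (norm B * norm D)"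
    by (intro mult_left_mono norm_matrix_mult_le) simp
  finally have "\<bar>trace ((W ** (B ** D) + transpose (B ** D) ** W) ** G)\<bar>
      \<le> real CARD('d) * ((2 * norm W * (norm B * norm D)) * norm G)"
    by (intro order_trans[OF abs_trace_mult_le] mult_left_mono mult_right_mono) auto
  with quadratic show ?thesis
    using lqr_cost_diff_first_order[OF stable stable', of Q R] unfolding W_def G_def
    by (simp add: algebra_simps)
qed

lemma exp_stable_feedback_neighbourhood:
  fixes A :: "real^'d^'d" and B :: "real^'p^'d"
  assumes "exp_stable (A + B ** U)"
  obtains \<eta> a C where "\<eta> > 0" "a > 0"
    "\<And>D t. norm D \<le> \<eta> \<Longrightarrow> t \<ge> 0 \<Longrightarrow> norm (mexp (t *\<^sub>R (A + B ** (U + D)))) \<le> C * exp (-a*t)"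
proof -
  obtain \<delta> a C where \<delta>: "\<delta> > 0" and a: "a > 0"
    and C: "\<And>E t. norm E \<le> \<delta> \<Longrightarrow> t \<ge> 0 \<Longrightarrow> norm (mexp (t *\<^sub>R (A + B ** U + E))) \<le> C * exp (-a*t)"
    by (rule exp_stable_uniform_neighbourhood[OF assms]) blast
  define \<eta> where "\<eta> = \<delta> / (norm B + 1)"
  have \<eta>: "\<eta> > 0"
    using \<delta> by (simp add: \<eta>_def add_nonneg_pos)
  have small: "norm (B ** D) \<le> \<delta>" if "norm D \<le> \<eta>" for D :: "real^'d^'p"
  proof -
    have "norm (B ** D) \<le> norm B * \<eta>"
      using norm_matrix_mult_le[of B D] mult_left_mono[OF that norm_ge_zero[of B]] by linarith
    also have "\<dots> \<le> (norm B + 1) * \<eta>"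
      using \<eta> by (simp add: distrib_right)
    also have "\<dots> = \<delta>"
      using add_nonneg_pos[OF norm_ge_zero[of B] zero_less_one] by (simp add: \<eta>_def)
    finally show ?thesis .
  qed
  have "norm (mexp (t *\<^sub>R (A + B ** (U + D)))) \<le> C * exp (-a*t)" if "norm D \<le> \<eta>" "t \<ge> 0" for D t
    using C[OF small[OF that(1)] that(2)] by (simp add: matrix_add_ldistrib add.assoc)
  with \<eta> a show ?thesis
    by (rule that)
qed

lemma lqr_cost_quadratic_remainder:
  fixes A :: "real^'d^'d" and B :: "real^'p^'d"
  assumes stable: "exp_stable (A + B ** U)"
  obtains \<eta> K where "\<eta> > 0" "K \<ge> 0"
    "\<And>D. norm D \<le> \<eta> \<Longrightarrow> exp_stable (A + B ** (U + D))"
    "\<And>D. norm D \<le> \<eta> \<Longrightarrow> \<bar>lqr_cost A B Q R (U + D) - lqr_cost A B Q R U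
        - trace (lqr_cost_variation A B Q R U D ** gramian (A + B ** U))\<bar> \<le> K * norm D ^ 2"
proof -
  obtain \<eta> a C where \<eta>: "\<eta> > 0" and a: "a > 0"
    and C: "\<And>D t. norm D \<le> \<eta> \<Longrightarrow> t \<ge> 0 \<Longrightarrow> norm (mexp (t *\<^sub>R (A + B ** (U + D)))) \<le> C * exp (-a*t)"
    by (rule exp_stable_feedback_neighbourhood[OF stable]) blast
  have stable': "exp_stable (A + B ** (U + D))" if "norm D \<le> \<eta>" for D
    unfolding exp_stable_def using C[OF that] a by blast
  define S where "S = C^2 * norm (mat 1 :: real^'d^'d) / (2*a)"
  have gramian_bound: "norm (gramian (A + B ** (U + D))) \<le> S" if "norm D \<le> \<eta>" for D
    unfolding S_def using C[OF that] by (rule norm_gramian_le[OF a])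
  define \<kappa> where "\<kappa> = 2 * norm R * norm U + 2 * norm (lyap_integral (A + B ** U) (Q + transpose U ** R ** U)) * norm B"
  have variation_bound: "norm (lyap_integral (A + B ** U) (lqr_cost_variation A B Q R U D)) \<le> C^2 * \<kappa> / (2*a) * norm D" for D
  proof -
    have "norm (lyap_integral (A + B ** U) (lqr_cost_variation A B Q R U D))
        \<le> C^2 * norm (lqr_cost_variation A B Q R U D) / (2*a)"
      using C[of 0] \<eta> by (intro norm_lyap_integral_le[OF a]) simp
    also have "\<dots> \<le> C^2 * (\<kappa> * norm D) / (2*a)"
      using norm_lqr_cost_variation_le[of A B Q R U D] a
      by (intro divide_right_mono mult_left_mono) (simp_all add: \<kappa>_def)
    finally show ?thesis by simp
  qed
  define K where "K = real CARD('d) * S * (norm R + 2 * (C^2 * \<kappa> / (2*a)) * norm B)"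
  have "K \<ge> 0"
    using a by (simp add: K_def S_def \<kappa>_def)
  have "\<bar>lqr_cost A B Q R (U + D) - lqr_cost A B Q R U
      - trace (lqr_cost_variation A B Q R U D ** gramian (A + B ** U))\<bar> \<le> K * norm D ^ 2"
    if D: "norm D \<le> \<eta>" for D
  proof -
    have "real CARD('d) * norm (gramian (A + B ** (U + D)))
          * (norm R * norm D ^ 2 + 2 * norm (lyap_integral (A + B ** U) (lqr_cost_variation A B Q R U D)) * (norm B * norm D))
        \<le> real CARD('d) * S * (norm R * norm D ^ 2 + 2 * (C^2 * \<kappa> / (2*a) * norm D) * (norm B * norm D))"
      using gramian_bound[OF D] variation_bound[of D] a
      by (intro mult_mono mult_left_mono add_left_mono) (auto simp: S_def \<kappa>_def)
    also have "\<dots> = K * norm D ^ 2"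
      by (simp add: K_def power2_eq_square algebra_simps)
    finally show ?thesis
      using abs_lqr_cost_remainder_le[OF stable stable'[OF D], of Q R] by linarith
  qed
  with \<eta> \<open>K \<ge> 0\<close> stable' show ?thesis
    by (rule that)
qed

subsection \<open>Vanishing of the first variation at a minimum\<close>

lemma real_linear_term_vanishes:
  fixes h K e :: real
  assumes e: "e > 0" and K: "K \<ge> 0"
    and le: "\<And>c. \<bar>c\<bar> \<le> e \<Longrightarrow> 0 \<le> c * h + c^2 * K"
  shows "h = 0"
proof (rule ccontr)
  assume h: "h \<noteq> 0"
  define \<eta> where "\<eta> = min e (\<bar>h\<bar> / (2 * (K + 1)))"
  have \<eta>: "\<eta> > 0" using e h K by (simp add: \<eta>_def)
  define c where "c = (if h > 0 then - \<eta> else \<eta>)"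
  have "\<bar>c\<bar> = \<eta>" "c * h = - (\<eta> * \<bar>h\<bar>)"
    using \<eta> h by (auto simp: c_def)
  have "\<eta> * K \<le> \<bar>h\<bar> / (2 * (K + 1)) * K"
    using K by (intro mult_right_mono) (auto simp: \<eta>_def)
  also have "\<dots> \<le> \<bar>h\<bar> / (2 * (K + 1)) * (K + 1)"
    using K by (intro mult_left_mono) auto
  also have "\<dots> = \<bar>h\<bar> / 2"
    using K by (simp add: field_simps)
  finally have "\<eta> * (\<eta> * K) \<le> \<eta> * (\<bar>h\<bar> / 2)"
    by (rule mult_left_mono) (use \<eta> in simp)
  moreover have "c^2 * K = \<eta> * (\<eta> * K)"
    using \<open>\<bar>c\<bar> = \<eta>\<close> by (metis power2_abs power2_eq_square mult.assoc)
  moreover have "0 \<le> c * h + c^2 * K"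
    using \<open>\<bar>c\<bar> = \<eta>\<close> by (intro le) (simp add: \<eta>_def)
  moreover have "\<eta> * \<bar>h\<bar> > 0"
    using \<eta> h by simp
  ultimately show False
    using \<open>c * h = - (\<eta> * \<bar>h\<bar>)\<close> by linarith
qed

lemma linear_vanishes_at_local_min:
  fixes L :: "'a::real_normed_vector \<Rightarrow> real"
  assumes L: "linear L" and \<eta>: "\<eta> > 0" and K: "K \<ge> 0"
    and min: "\<And>D. norm D \<le> \<eta> \<Longrightarrow> 0 \<le> L D + K * norm D ^ 2"
  shows "L D = 0"
proof (rule real_linear_term_vanishes)
  show "\<eta> / (norm D + 1) > 0" using \<eta> by (simp add: add_nonneg_pos)
  show "K * norm D ^ 2 \<ge> 0" using K by simp
  fix c :: real assume c: "\<bar>c\<bar> \<le> \<eta> / (norm D + 1)"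
  have "norm (c *\<^sub>R D) \<le> \<eta> / (norm D + 1) * norm D"
    using mult_right_mono[OF c norm_ge_zero[of D]] by simp
  also have "\<dots> \<le> \<eta> / (norm D + 1) * (norm D + 1)"
    using \<eta> by (intro mult_left_mono) auto
  also have "\<dots> = \<eta>"
    using add_nonneg_pos[OF norm_ge_zero[of D] zero_less_one] by simp
  finally have "norm (c *\<^sub>R D) \<le> \<eta>" .
  then show "0 \<le> c * L D + c^2 * (K * norm D ^ 2)"
    using min[of "c *\<^sub>R D"] linear.scaleR[OF L]
    by (simp add: power_mult_distrib mult_ac)
qed

lemma lqr_cost_locally_quadratic_at_min:
  fixes A :: "real^'d^'d" and B :: "real^'p^'d" and Ustar :: "real^'d^'p"
  assumes stable: "exp_stable (A + B ** Ustar)"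
    and min: "\<And>U. exp_stable (A + B ** U) \<Longrightarrow> lqr_cost A B Q R Ustar \<le> lqr_cost A B Q R U"
  obtains \<eta> K where "\<eta> > 0" "K \<ge> 0"
    "\<And>D. norm D \<le> \<eta> \<Longrightarrow> lqr_cost A B Q R (Ustar + D) - lqr_cost A B Q R Ustar \<le> K * norm D ^ 2"
proof -
  obtain \<eta> K where \<eta>: "\<eta> > 0" and K: "K \<ge> 0"
    and stable': "\<And>D. norm D \<le> \<eta> \<Longrightarrow> exp_stable (A + B ** (Ustar + D))"
    and remainder: "\<And>D. norm D \<le> \<eta> \<Longrightarrow> \<bar>lqr_cost A B Q R (Ustar + D) - lqr_cost A B Q R Ustar
        - trace (lqr_cost_variation A B Q R Ustar D ** gramian (A + B ** Ustar))\<bar> \<le> K * norm D ^ 2"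
    by (rule lqr_cost_quadratic_remainder[OF stable, where Q = Q and R = R]) blast
  have "trace (lqr_cost_variation A B Q R Ustar D ** gramian (A + B ** Ustar)) = 0" for D
  proof (rule linear_vanishes_at_local_min[OF linear_trace_lqr_cost_variation \<eta> K])
    fix D :: "real^'d^'p" assume D: "norm D \<le> \<eta>"
    then show "0 \<le> trace (lqr_cost_variation A B Q R Ustar D ** gramian (A + B ** Ustar)) + K * norm D ^ 2"
      using remainder[OF D] min[OF stable'[OF D]] by linarith
  qed
  then have "lqr_cost A B Q R (Ustar + D) - lqr_cost A B Q R Ustar \<le> K * norm D ^ 2"
    if "norm D \<le> \<eta>" for D
    using remainder[OF that] by fastforce
  with \<eta> K show ?thesis
    by (rule that)
qed

theorem lemma13:
  fixes A :: "real^'d^'d" and B :: "real^'p^'d" and Q :: "real^'d^'d" and R :: "real^'p^'p"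
    and Ustar :: "real^'d^'p"
  assumes "sym_pos_def Q" and "sym_pos_def R"
    and "spectral_abscissa (A + B ** Ustar) < 0"
    and "\<forall>U. spectral_abscissa (A + B ** U) < 0 \<longrightarrow> lqr_cost A B Q R Ustar \<le> lqr_cost A B Q R U"
  shows "\<exists>\<epsilon>0 > 0. \<exists>C1. \<forall>dU :: real^'d^'p. spec_norm dU = 1 \<longrightarrow>
           (\<forall>\<epsilon> \<in> {0..\<epsilon>0}. lqr_cost A B Q R (Ustar + \<epsilon> *\<^sub>R dU) - lqr_cost A B Q R Ustar \<le> C1 * \<epsilon>^2)"
proof -
  obtain \<eta> K where \<eta>: "\<eta> > 0" and K: "K \<ge> 0"
    and near: "\<And>D. norm D \<le> \<eta> \<Longrightarrow> lqr_cost A B Q R (Ustar + D) - lqr_cost A B Q R Ustar \<le> K * norm D ^ 2"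
    using lqr_cost_locally_quadratic_at_min[OF exp_stable_if_spectral_abscissa_neg[OF assms(3)]]
      assms(4) spectral_abscissa_neg_if_exp_stable by blast
  define \<epsilon>0 where "\<epsilon>0 = \<eta> / sqrt (real CARD('d))"
  have "lqr_cost A B Q R (Ustar + \<epsilon> *\<^sub>R dU) - lqr_cost A B Q R Ustar \<le> (K * real CARD('d)) * \<epsilon>^2"
    if "spec_norm dU = 1" and \<epsilon>: "\<epsilon> \<in> {0..\<epsilon>0}" for dU :: "real^'d^'p" and \<epsilon>
  proof -
    have scaled: "norm (\<epsilon> *\<^sub>R dU) \<le> \<epsilon> * sqrt (real CARD('d))"
      using norm_le_sqrt_card_spec_norm[of dU] that by (simp add: mult_left_mono)
    also have "\<dots> \<le> \<eta>"
      using \<epsilon> by (simp add: \<epsilon>0_def le_divide_eq)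
    finally have "lqr_cost A B Q R (Ustar + \<epsilon> *\<^sub>R dU) - lqr_cost A B Q R Ustar \<le> K * norm (\<epsilon> *\<^sub>R dU) ^ 2"
      by (rule near)
    also have "\<dots> \<le> K * (\<epsilon> * sqrt (real CARD('d))) ^ 2"
      using scaled K by (intro mult_left_mono power_mono) simp_all
    finally show ?thesis
      by (simp add: power_mult_distrib mult_ac)
  qed
  moreover have "\<epsilon>0 > 0"
    using \<eta> by (simp add: \<epsilon>0_def)
  ultimately show ?thesis
    by blast
qed

end
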